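(* Suppose that $A$ is to be inserted to $(t_{\lceil\alpha(r-1)i\rceil+1},\ldots,t_{\lceil\alpha(r)i\rceil-1})$ for an even $i$. Then 2Merge requires \[ {\cal A}(r)= \lceil\lg w_r\rceil + 7-4\sqrt{2} - \frac{10-6\sqrt{2}}{p_r} + \frac{3-2\sqrt{2}}{p_r^2}\pm O\left(\frac{2^{r/2}}{i}\right) \] comparisons on average at Step~3. Furthermore, the expected value of ${\cal A}(r)$ is $\mathbf{Pr}[r=1]{\cal A}(1)+\mathbf{Pr}[r=2]{\cal A}(2)+\cdots = \lceil\lg i\rceil + {\cal T}(i)$, where \[ {\cal T}(i) = 5-4\sqrt{2} - \frac{1}{p_i} + \frac{1}{6 p^2_i} + \begin{cases} -\frac{1}{6 p_i} - \frac{1}{16p^2_i} -\frac{2}{3} & p_i \in (1/2, \frac{1+\sqrt{2}}{4}], \\ -\frac{\sqrt{2}}{3 p_i} -\frac{1}{3} & p_i \in (\frac{1+\sqrt{2}}{4}, \frac{2+\sqrt{2}}{4}], \\ -\frac{4}{3p_i} + \frac{1}{4p^2_i} + \frac{1}{3} & p_i \in (\frac{2+\sqrt{2}}{4}, 1]. \end{cases} \]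
   Context: $\lg=\log_2$, and for real $x>0$, $p_x = x/2^{\lceil \lg x\rceil}$. RHBS$(A,T)$, $T=(t_1,\dots,t_m)$ sorted: if $m\le 3\cdot 2^{\lceil\lg(m+1)\rceil-2}-1$ let $d=2^{\lceil\lg(m+1)\rceil-2}$, else $d=m-2^{\lceil\lg(m+1)\rceil-1}+1$; compare $A$ with $t_d$ and recurse on the left or right part (the number of comparisons is monotone nondecreasing in the position of $A$). 2Merge$(A,B,T)$ with $T=(t_1,\dots,t_{i-2})$ sorted, $i$ even, $i\ge4$: Step 1 compare $A,B$ and swap so $A<B$. Step 2: with $\alpha(r)=1-2^{-r/2}$, for $r=1,2,\dots$ up to $2\lg i$ compare $A$ with $t_{\lceil\alpha(r)i\rceil}$, stopping at the first $r$ with $A<t_{\lceil\alpha(r)i\rceil}$. Step 3: insert $A$ into $(t_{\lceil\alpha(r-1)i\rceil+1},\dots,t_{\lceil\alpha(r)i\rceil-1})$ by RHBS. Step 4: insert $B$ by RHBS into the part of $T$ right of $A$. The two inserted elements occupy uniformly random distinct positions among the $i$ positions, so given $A<B$, the probability that $A$ falls between $t_{\ell-1}$ and $t_\ell$ is $(i-\ell)/\binom{i}{2}$. Here $w_r := (\sqrt{2}-1)2^{-r/2}i$ (not necessarily integral) and $p_r := p_{w_r} = w_r/2^{\lceil\lg w_r\rceil}$; $r$ is the number of comparisons made in Step 2. *)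

theory Defs
  imports "HOL-Analysis.Analysis" "HOL-Library.Log_Nat"
begin

text \<open>Pivot index d of RHBS on a sorted list of m elements, with k = ceil(lg(m+1)):
  if m <= 3*2^(k-2) - 1 (equivalently 4(m+1) <= 3*2^k) then d = 2^(k-2),
  else d = m - 2^(k-1) + 1.\<close>
definition rhbs_pivot :: "nat \<Rightarrow> nat" where
  "rhbs_pivot m = (let k = ceillog2 (m + 1) in
     if 4 * (m + 1) \<le> 3 * 2 ^ k then 2 ^ (k - 2) else m + 1 - 2 ^ (k - 1))"

lemma rhbs_pivot_bounds:
  assumes "m > 0" shows "1 \<le> rhbs_pivot m \<and> rhbs_pivot m \<le> m"
proof -
  define k where "k = ceillog2 (m + 1)"
  have up: "m + 1 \<le> 2 ^ k" unfolding k_def by (rule le_two_power_ceillog2)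
  have lo: "2 ^ k < 2 * (m + 1)" unfolding k_def by (rule two_power_ceillog2_gt) simp
  have k1: "k \<ge> 1" using up assms
    by (cases k) auto
  show ?thesis
  proof (cases "4 * (m + 1) \<le> 3 * 2 ^ k")
    case True
    have k2: "k \<ge> 2"
    proof (rule ccontr)
      assume "\<not> 2 \<le> k" then have "k \<le> 1" by simp
      then have "(2::nat) ^ k \<le> 2 ^ 1" by (intro power_increasing) auto
      then show False using True assms by simp
    qed
    have e: "(2::nat) ^ k = 4 * 2 ^ (k - 2)"
    proof -
      have "k = 2 + (k - 2)" using k2 by simp
      then have "(2::nat) ^ k = 2 ^ 2 * 2 ^ (k - 2)" by (metis power_add)
      then show ?thesis by simp
    qed
    have "4 * 2 ^ (k - 2) < 2 * (m + 1)" using lo e by simp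
    moreover have "\<And>x::nat. 4 * x < 2 * (m + 1) \<Longrightarrow> x \<le> m" by presburger
    ultimately have "2 ^ (k - 2) \<le> m" by blast
    moreover have "1 \<le> (2::nat) ^ (k - 2)" by simp
    ultimately show ?thesis using True unfolding rhbs_pivot_def k_def[symmetric] Let_def by simp
  next
    case False
    have e: "(2::nat) ^ k = 2 * 2 ^ (k - 1)"
    proof -
      have "k = 1 + (k - 1)" using k1 by simp
      then have "(2::nat) ^ k = 2 ^ 1 * 2 ^ (k - 1)" by (metis power_add)
      then show ?thesis by simp
    qed
    have "2 ^ (k - 1) \<le> m" using lo e by simp
    moreover have "1 \<le> (2::nat) ^ (k - 1)" by simp
    moreover have "\<And>x::nat. x \<le> m \<Longrightarrow> 1 \<le> x \<Longrightarrow> 1 \<le> m + 1 - x \<and> m + 1 - x \<le> m" by arith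
    ultimately have "1 \<le> m + 1 - 2 ^ (k - 1) \<and> m + 1 - 2 ^ (k - 1) \<le> m" by blast
    then show ?thesis using False unfolding rhbs_pivot_def k_def[symmetric] Let_def by simp
  qed
qed

text \<open>rhbs m j: number of comparisons RHBS makes to insert A into a sorted list
  (t_1,...,t_m) when A falls into gap j (1 <= j <= m+1), i.e. between t_(j-1) and t_j.\<close>
function rhbs :: "nat \<Rightarrow> nat \<Rightarrow> nat" where
  "rhbs m j = (if m = 0 then 0 else
     (let d = rhbs_pivot m in
        if j \<le> d then 1 + rhbs (d - 1) j else 1 + rhbs (m - d) (j - d)))"
  by auto
termination
proof (relation "Wellfounded.measure fst", goal_cases)
  case 1 then show ?case by simp
next
  case (2 m j d)
  then have "d \<le> m" using rhbs_pivot_bounds[of m] by simp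
  then show ?case using 2 by simp
next
  case (3 m j d)
  then have "1 \<le> d" using rhbs_pivot_bounds[of m] by simp
  then show ?case using 3 by simp
qed

declare rhbs.simps [simp del]

definition alpha :: "nat \<Rightarrow> real" where
  "alpha r = 1 - 2 powr (- real r / 2)"

text \<open>Index ceil(alpha(r) i) of the element compared in the r-th comparison of Step 2
  (for r = 0 this is 0).\<close>
definition cidx :: "nat \<Rightarrow> nat \<Rightarrow> nat" where
  "cidx i r = nat \<lceil>alpha r * real i\<rceil>"

text \<open>Step 2 is performed for r = 1, 2, ... up to 2 lg i.\<close>
definition rmax :: "nat \<Rightarrow> nat" where
  "rmax i = nat \<lfloor>2 * log 2 (real i)\<rfloor>"

text \<open>Positions: A falls between t_(l-1) and t_l, l in {1..i-1} (given A < B).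
  A < t_c iff l <= c.  Number r of Step-2 comparisons.\<close>
definition step2 :: "nat \<Rightarrow> nat \<Rightarrow> nat" where
  "step2 i l = (LEAST r. 1 \<le> r \<and> r \<le> rmax i \<and> l \<le> cidx i r)"

definition posprob :: "nat \<Rightarrow> nat \<Rightarrow> real" where
  "posprob i l = real (i - l) / real (i choose 2)"

text \<open>Comparisons of Step 3: RHBS of A into (t_(c(r-1)+1), ..., t_(c(r)-1)).\<close>
definition step3 :: "nat \<Rightarrow> nat \<Rightarrow> nat" where
  "step3 i l = (let r = step2 i l; lo = cidx i (r - 1); hi = cidx i r
                in rhbs (hi - lo - 1) (l - lo))"

definition positions_r :: "nat \<Rightarrow> nat \<Rightarrow> nat set" where
  "positions_r i r = {l \<in> {1..i - 1}. step2 i l = r}"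

definition PrR :: "nat \<Rightarrow> nat \<Rightarrow> real" where
  "PrR i r = (\<Sum>l\<in>positions_r i r. posprob i l)"

text \<open>Average number of Step-3 comparisons given that Step 2 made r comparisons.\<close>
definition Acal :: "nat \<Rightarrow> nat \<Rightarrow> real" where
  "Acal i r = (\<Sum>l\<in>positions_r i r. posprob i l * real (step3 i l)) / PrR i r"

definition expected_step3 :: "nat \<Rightarrow> real" where
  "expected_step3 i = (\<Sum>r\<in>{1..rmax i}. PrR i r * Acal i r)"

definition px :: "real \<Rightarrow> real" where
  "px x = x / 2 powr real_of_int \<lceil>log 2 x\<rceil>"

definition wr :: "nat \<Rightarrow> nat \<Rightarrow> real" where
  "wr i r = (sqrt 2 - 1) * 2 powr (- real r / 2) * real i"

definition Tcal :: "nat \<Rightarrow> real" where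
  "Tcal i = (let p = px (real i) in
     5 - 4 * sqrt 2 - 1 / p + 1 / (6 * p\<^sup>2) +
     (if p \<le> (1 + sqrt 2) / 4 then - 1 / (6 * p) - 1 / (16 * p\<^sup>2) - 2 / 3
      else if p \<le> (2 + sqrt 2) / 4 then - sqrt 2 / (3 * p) - 1 / 3
      else - 4 / (3 * p) + 1 / (4 * p\<^sup>2) + 1 / 3))"

end

theory Submission
  imports Defs
begin

text \<open>
  Write b_r = floor (2^(-r/2) i) for the number of elements of T to the right of the r-th
  probe of Step 2. Given that Step 2 stops after r comparisons, A lies in one of the
  n = b_(r-1) - b_r gaps between the probes r - 1 and r, with probability proportional to the
  number t of positions to its right. RHBS reaches every gap with K = ceil (lg n) comparisons, except
  the 2^K - n leftmost (heaviest) ones, which need K - 1; summing these linear weights gives A(r)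
  in closed form as a function of n and n / (b_(r-1) + b_r - 1). Since n = w_r + O(1), the ratio
  equals 3 - 2 sqrt 2 + O(1/w_r), and the closed form is Lipschitz relative to its argument across
  the dyadic intervals, A(r) agrees with the stated formula up to O(1/w_r) = O(2^(r/2)/i).

  For the expectation, Pr[r] = tau_(r-1) - tau_r with tau_r = b_r (b_r - 1) / (i (i - 1)), which is
  2^(-r) + O(2^(-r/2)/i). Summation by parts, together with the bounded change of the limit formula
  from r to r + 1, replaces Pr[r] by 2^(-r) at a cost O(1/i). Finally the limit formula at w_r
  equals ceil (lg i) - ceil (r/2) plus a constant depending only on p_i and the parity of r,
  so the remaining series is geometric and sums to ceil (lg i) + T(i).
\<close>

section \<open>Closed form of RHBS\<close>

lemma rhbs_unfold:
  assumes "2 \<le> n" "rhbs_pivot (n - 1) = d"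
  shows "rhbs (n - 1) j = (if j \<le> d then 1 + rhbs (d - 1) j else 1 + rhbs (n - 1 - d) (j - d))"
  using assms by (subst rhbs.simps) (simp add: Let_def)

lemma rhbs_closed_small_pivot:
  fixes n j :: nat
  defines "K \<equiv> ceillog2 n"
  assumes IH: "\<And>m j. m < n \<Longrightarrow> 1 \<le> m \<Longrightarrow> 1 \<le> j \<Longrightarrow> j \<le> m \<Longrightarrow>
      rhbs (m - 1) j + of_bool (j + m \<le> 2 ^ ceillog2 m) = ceillog2 m"
    and n: "2 \<le> n" and j: "1 \<le> j" "j \<le> n" and small: "4 * n \<le> 3 * 2 ^ K"
  shows "rhbs (n - 1) j + of_bool (j + n \<le> 2 ^ K) = K"
proof -
  have up: "n \<le> 2 ^ K" and lo: "2 ^ K < 2 * n"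
    using n unfolding K_def by (simp_all add: le_two_power_ceillog2 two_power_ceillog2_gt)
  have "2 \<le> K"
  proof (rule ccontr)
    assume "\<not> 2 \<le> K"
    then have "(2::nat) ^ K \<le> 2 ^ 1" by (intro power_increasing) auto
    then show False using small n by simp
  qed
  then obtain k where k: "K = k + 2" by (metis le_add_diff_inverse2)
  define d :: nat where "d = 2 ^ k"
  have pow: "2 ^ K = 4 * d" "2 ^ (K - 1) = 2 * d" unfolding d_def k by simp_all
  have d: "1 \<le> d" "d < n" using lo pow by (auto simp: d_def)
  have rec: "rhbs (n - 1) j = (if j \<le> d then 1 + rhbs (d - 1) j else 1 + rhbs (n - 1 - d) (j - d))"
    using n small by (intro rhbs_unfold) (simp_all add: rhbs_pivot_def Let_def K_def[symmetric] k d_def)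
  show ?thesis
  proof (cases "j \<le> d")
    case True
    have "rhbs (d - 1) j + of_bool (j + d \<le> 2 ^ ceillog2 d) = ceillog2 d"
      using IH[of d j] d j True by simp
    then show ?thesis using rec True small pow j unfolding d_def k by simp
  next
    case False
    have cl: "ceillog2 (n - d) = K - 1" using up lo pow small by (intro ceillog2_eqI) auto
    have "rhbs (n - d - 1) (j - d) + of_bool (j - d + (n - d) \<le> 2 ^ (K - 1)) = K - 1"
      using IH[of "n - d" "j - d"] d j False cl by simp
    moreover have "(j - d + (n - d) \<le> 2 ^ (K - 1)) = (j + n \<le> 2 ^ K)" using pow d False by auto
    ultimately show ?thesis using rec False k by (simp add: diff_diff_add)
  qed
qed

lemma rhbs_closed_large_pivot:
  fixes n j :: nat
  defines "K \<equiv> ceillog2 n"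
  assumes IH: "\<And>m j. m < n \<Longrightarrow> 1 \<le> m \<Longrightarrow> 1 \<le> j \<Longrightarrow> j \<le> m \<Longrightarrow>
      rhbs (m - 1) j + of_bool (j + m \<le> 2 ^ ceillog2 m) = ceillog2 m"
    and n: "2 \<le> n" and j: "1 \<le> j" "j \<le> n" and large: "\<not> 4 * n \<le> 3 * 2 ^ K"
  shows "rhbs (n - 1) j + of_bool (j + n \<le> 2 ^ K) = K"
proof -
  have up: "n \<le> 2 ^ K" and lo: "2 ^ K < 2 * n"
    using n unfolding K_def by (simp_all add: le_two_power_ceillog2 two_power_ceillog2_gt)
  obtain k where k: "K = k + 1" using up n by (cases K) auto
  define h :: nat where "h = 2 ^ k"
  define d where "d = n - h"
  have pow: "2 ^ K = 2 * h" unfolding h_def k by simp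
  have d: "1 \<le> d" "d < n" "h < n" using lo pow up unfolding d_def by (auto simp: h_def)
  have rec: "rhbs (n - 1) j = (if j \<le> d then 1 + rhbs (d - 1) j else 1 + rhbs (n - 1 - d) (j - d))"
  proof (rule rhbs_unfold[OF n])
    have "rhbs_pivot (n - 1) = n - 2 ^ (K - 1)"
      using n large by (simp add: rhbs_pivot_def Let_def K_def[symmetric])
    then show "rhbs_pivot (n - 1) = d" unfolding d_def h_def k by simp
  qed
  show ?thesis
  proof (cases "j \<le> d")
    case True
    have cl: "ceillog2 d = k"
      using up lo pow large unfolding d_def by (intro ceillog2_eqI) (auto simp: h_def[symmetric])
    have "rhbs (d - 1) j + of_bool (j + d \<le> 2 ^ k) = k"
      using IH[of d j] d j True cl by simp
    moreover have "(j + d \<le> 2 ^ k) = (j + n \<le> 2 ^ K)" using pow d unfolding d_def h_def by auto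
    ultimately show ?thesis using rec True k by simp
  next
    case False
    have "rhbs (h - 1) (j - d) + of_bool (j - d + h \<le> 2 ^ ceillog2 h) = ceillog2 h"
      using IH[of h "j - d"] d j False unfolding d_def by (simp add: h_def)
    moreover have "n - 1 - d = h - 1" "ceillog2 h = k" "\<not> j - d + h \<le> h"
      using d False unfolding d_def h_def by auto
    moreover have "\<not> j + n \<le> 2 ^ K" using False large pow unfolding d_def by simp
    ultimately show ?thesis using rec False k d unfolding h_def by simp
  qed
qed

text \<open>RHBS on n - 1 elements is a search tree with n leaves and depth K = ceillog2 n in which
  exactly the leftmost 2^K - n leaves have depth K - 1.\<close>
lemma rhbs_closed:
  assumes "1 \<le> j" "j \<le> n"
  shows "rhbs (n - 1) j + of_bool (j + n \<le> 2 ^ ceillog2 n) = ceillog2 n"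
  using assms
proof (induction n arbitrary: j rule: less_induct)
  case (less n)
  show ?case
  proof (cases "n = 1")
    case True
    then show ?thesis using less.prems by (simp add: rhbs.simps)
  next
    case False
    then have "2 \<le> n" using less.prems by simp
    then show ?thesis
      using rhbs_closed_small_pivot[OF less.IH] rhbs_closed_large_pivot[OF less.IH] less.prems by blast
  qed
qed

section \<open>Dyadic scale and the limit formula\<close>

lemma sqrt2_bounds: "sqrt 2 < (17/12::real)" "(7/5::real) < sqrt 2"
proof -
  show "sqrt 2 < (17/12::real)" by (rule real_less_lsqrt) (simp_all add: power2_eq_square)
  show "(7/5::real) < sqrt 2" by (rule real_less_rsqrt) (simp add: power2_eq_square)
qed

lemma two_powr_pred: "(2::real) powr (real_of_int j - 1) = 2 powr j / 2"
  by (simp add: powr_diff)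

lemma two_powr_succ: "(2::real) powr (real_of_int (j + 1)) = 2 * 2 powr j"
  by (simp add: powr_add)

definition ceil_log2 :: "real \<Rightarrow> int" where
  "ceil_log2 y = \<lceil>log 2 y\<rceil>"

lemma ceil_log2_bounds:
  assumes "y > 0" shows "2 powr (ceil_log2 y - 1) < y" "y \<le> 2 powr (ceil_log2 y)"
proof -
  have "real_of_int (ceil_log2 y) - 1 < log 2 y" unfolding ceil_log2_def by linarith
  then show "2 powr (ceil_log2 y - 1) < y" using less_log_iff[of 2 y] assms by simp
  have "log 2 y \<le> real_of_int (ceil_log2 y)" unfolding ceil_log2_def by simp
  then show "y \<le> 2 powr (ceil_log2 y)" using log_le_iff[of 2 y] assms by simp
qed

lemma ceil_log2_unique:
  assumes "2 powr (real_of_int j - 1) < y" "y \<le> 2 powr j" shows "ceil_log2 y = j"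
proof -
  have y: "y > 0" using assms(1) by (smt (verit) powr_gt_zero)
  have "real_of_int j - 1 < log 2 y" using less_log_iff[of 2 y] y assms by simp
  moreover have "log 2 y \<le> real_of_int j" using log_le_iff[of 2 y] y assms by simp
  ultimately show ?thesis unfolding ceil_log2_def by (intro ceiling_unique) auto
qed

lemma ceil_log2_le: assumes "0 < y" "y \<le> 2 powr (real_of_int m)" shows "ceil_log2 y \<le> m"
proof -
  have "2 powr (real_of_int (ceil_log2 y) - 1) < 2 powr (real_of_int m)"
    using ceil_log2_bounds(1)[OF assms(1)] assms by (simp del: powr_less_cancel_iff)
  then have "real_of_int (ceil_log2 y) - 1 < real_of_int m" by simp
  then show ?thesis by linarith
qed

lemma ceil_log2_gt: assumes "0 < y" "2 powr (real_of_int m) < y" shows "m < ceil_log2 y"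
proof -
  have "2 powr (real_of_int m) < 2 powr (real_of_int (ceil_log2 y))"
    using ceil_log2_bounds(2)[OF assms(1)] assms by linarith
  then have "real_of_int m < real_of_int (ceil_log2 y)" by simp
  then show ?thesis by linarith
qed

lemma ceil_log2_of_nat: assumes "1 \<le> n" shows "ceil_log2 (real n) = int (ceillog2 n)"
proof -
  define K where "K = ceillog2 n"
  have up: "n \<le> 2 ^ K" and lo: "2 ^ K < 2 * n"
    unfolding K_def using assms by (simp_all add: le_two_power_ceillog2 two_power_ceillog2_gt)
  have "(2::real) ^ K < 2 * real n" "real n \<le> (2::real) ^ K"
    using lo up by (metis of_nat_less_iff of_nat_le_iff of_nat_mult of_nat_numeral of_nat_power)+
  then show ?thesis unfolding K_def[symmetric]
    by (intro ceil_log2_unique) (simp_all add: powr_realpow powr_diff)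
qed

lemma ceil_log2_ratio_bounds:
  assumes "y > 0" shows "1 \<le> 2 powr (ceil_log2 y) / y" "2 powr (ceil_log2 y) / y < 2"
  using ceil_log2_bounds[OF assms] two_powr_pred[of "ceil_log2 y"] assms by (auto simp: field_simps)

lemma px_bounds: assumes "y > 0" shows "1/2 < px y" "px y \<le> 1"
proof -
  have e: "px y = y / 2 powr (real_of_int (ceil_log2 y))" unfolding px_def ceil_log2_def by simp
  show "1/2 < px y" "px y \<le> 1"
    unfolding e using ceil_log2_bounds[OF assms] by (auto simp: two_powr_pred field_simps)
qed

lemma px_scale: "y = px y * 2 powr (real_of_int (ceil_log2 y))"
  unfolding px_def ceil_log2_def by simp

lemma dyadic_lipschitz:
  fixes \<phi> :: "int \<Rightarrow> real \<Rightarrow> real"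
  assumes lip: "\<And>j y z. 2 powr (real_of_int j - 1) \<le> y \<Longrightarrow> y \<le> z \<Longrightarrow> z \<le> 2 powr j \<Longrightarrow>
      \<bar>\<phi> j y - \<phi> j z\<bar> \<le> L * (z - y) / 2 powr j"
    and cont: "\<And>j. \<phi> (j+1) (2 powr j) = \<phi> j (2 powr j)"
    and y: "0 < y" "y \<le> z" "z \<le> 2 * y" and L: "L \<ge> 0"
  shows "\<bar>\<phi> (ceil_log2 y) y - \<phi> (ceil_log2 z) z\<bar> \<le> L * (z - y) / y"
proof -
  define j where "j = ceil_log2 y"
  define P where "P = (2::real) powr j"
  have P0: "P > 0" unfolding P_def by simp
  have b1: "P / 2 < y" "y \<le> P"
    using ceil_log2_bounds[OF y(1)] two_powr_pred[of j] unfolding j_def[symmetric] P_def by auto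
  have fin: "L * (z - y) / P \<le> L * (z - y) / y"
    using b1 y L P0 by (intro divide_left_mono mult_nonneg_nonneg) auto
  show ?thesis
  proof (cases "z \<le> P")
    case True
    have "ceil_log2 z = j"
      using True b1 y unfolding P_def by (intro ceil_log2_unique) (auto simp: two_powr_pred)
    then have "\<bar>\<phi> (ceil_log2 y) y - \<phi> (ceil_log2 z) z\<bar> \<le> L * (z - y) / P"
      using lip[of j y z] b1 y True unfolding j_def P_def by (auto simp: two_powr_pred)
    then show ?thesis using fin by linarith
  next
    case False
    have "2 powr (real_of_int (j + 1) - 1) = P" "2 powr (real_of_int (j + 1)) = 2 * P"
      unfolding P_def by (simp, simp add: two_powr_succ del: of_int_add)
    then have kz: "ceil_log2 z = j + 1"
      using False b1 y by (intro ceil_log2_unique) simp_all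
    have l1: "\<bar>\<phi> j y - \<phi> j P\<bar> \<le> L * (P - y) / P"
      using lip[of j y P] b1 unfolding P_def by (auto simp: two_powr_pred)
    have l2: "\<bar>\<phi> (j+1) P - \<phi> (j+1) z\<bar> \<le> L * (z - P) / (2 * P)"
      using lip[of "j+1" P z] b1 y False unfolding P_def by (auto simp: two_powr_succ simp del: of_int_add)
    have l3: "L * (z - P) / (2 * P) \<le> L * (z - P) / P"
      using L False P0 by (intro divide_left_mono mult_nonneg_nonneg) auto
    have "L * (P - y) / P + L * (z - P) / P = L * (z - y) / P" using P0 by (simp add: field_simps)
    moreover have "\<phi> (j+1) P = \<phi> j P" using cont[of j] unfolding P_def .
    ultimately have "\<bar>\<phi> j y - \<phi> (j+1) z\<bar> \<le> L * (z - y) / P"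
      using l1 l2 l3 by linarith
    then show ?thesis using fin kz j_def by simp
  qed
qed

lemma dyadic_lipschitz_sym:
  fixes \<phi> :: "int \<Rightarrow> real \<Rightarrow> real"
  assumes lip: "\<And>j y z. 2 powr (real_of_int j - 1) \<le> y \<Longrightarrow> y \<le> z \<Longrightarrow> z \<le> 2 powr j \<Longrightarrow>
      \<bar>\<phi> j y - \<phi> j z\<bar> \<le> L * (z - y) / 2 powr j"
    and cont: "\<And>j. \<phi> (j+1) (2 powr j) = \<phi> j (2 powr j)"
    and y: "0 < y" "0 < z" "z \<le> 2 * y" "y \<le> 2 * z" and L: "L \<ge> 0"
  shows "\<bar>\<phi> (ceil_log2 y) y - \<phi> (ceil_log2 z) z\<bar> \<le> L * \<bar>z - y\<bar> / min y z"
proof (cases "y \<le> z")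
  case True
  then show ?thesis using dyadic_lipschitz[OF lip cont, of y z] y L by (simp add: min_def)
next
  case False
  then show ?thesis
    using dyadic_lipschitz[OF lip cont, of z y] y L by (simp add: min_def abs_minus_commute)
qed

lemma dyadic_ratio_lipschitz:
  fixes P y z :: real assumes "P/2 \<le> y" "y \<le> z" "z \<le> P" "P > 0"
  shows "0 \<le> P/y - P/z" "P/y - P/z \<le> 4 * (z - y) / P"
proof -
  have y0: "y > 0" using assms by linarith
  have e: "P/y - P/z = P * (z - y) / (y * z)" using y0 assms by (simp add: field_simps)
  have "P * P \<le> 4 * (y * z)" using assms mult_mono[of "P/2" y "P/2" z] by auto
  then have "P / (y * z) \<le> 4 / P" using assms y0 by (simp add: divide_simps)
  then have "(z - y) * (P / (y * z)) \<le> (z - y) * (4 / P)" using assms by (intro mult_left_mono) auto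
  then show "P/y - P/z \<le> 4 * (z - y) / P" unfolding e by (simp add: field_simps)
  show "0 \<le> P/y - P/z" unfolding e using assms y0 by simp
qed

text \<open>For n equally likely gaps, RHBS costs rhbs_mean (ceil_log2 n) n on average;
  rhbs_bias is the correction for gap probabilities growing linearly.\<close>
definition rhbs_mean :: "int \<Rightarrow> real \<Rightarrow> real" where
  "rhbs_mean j y = real_of_int j + 1 - 2 powr j / y"

definition rhbs_bias :: "int \<Rightarrow> real \<Rightarrow> real" where
  "rhbs_bias j y = (2 powr j / y - 1) * (2 - 2 powr j / y)"

lemma rhbs_mean_lipschitz:
  assumes "2 powr (real_of_int j - 1) \<le> y" "y \<le> z" "z \<le> 2 powr j"
  shows "\<bar>rhbs_mean j y - rhbs_mean j z\<bar> \<le> 4 * (z - y) / 2 powr j"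
  using dyadic_ratio_lipschitz[of "2 powr j" y z] assms
  unfolding rhbs_mean_def two_powr_pred by simp

lemma rhbs_bias_lipschitz:
  assumes "2 powr (real_of_int j - 1) \<le> y" "y \<le> z" "z \<le> 2 powr j"
  shows "\<bar>rhbs_bias j y - rhbs_bias j z\<bar> \<le> 4 * (z - y) / 2 powr j"
proof -
  define P where "P = (2::real) powr j"
  have P0: "P > 0" unfolding P_def by simp
  have h: "P/2 \<le> y" "y \<le> z" "z \<le> P" using assms unfolding P_def two_powr_pred by auto
  have y0: "y > 0" using h P0 by linarith
  define q where "q = P/y - 1"
  define r where "r = P/z - 1"
  have q: "0 \<le> q" "q \<le> 1" using h y0 P0 unfolding q_def by (auto simp: field_simps)
  have r: "0 \<le> r" "r \<le> 1" using h y0 P0 unfolding r_def by (auto simp: field_simps)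
  have il: "0 \<le> q - r" "q - r \<le> 4 * (z - y) / P"
    using dyadic_ratio_lipschitz[OF h P0] unfolding q_def r_def by auto
  have "rhbs_bias j y - rhbs_bias j z = (q - r) * (1 - q - r)"
    unfolding rhbs_bias_def P_def[symmetric] q_def r_def by (simp add: algebra_simps)
  moreover have "\<bar>(q - r) * (1 - q - r)\<bar> \<le> (q - r) * 1"
  proof -
    have "\<bar>1 - q - r\<bar> \<le> 1" using q r by linarith
    then have "\<bar>q - r\<bar> * \<bar>1 - q - r\<bar> \<le> \<bar>q - r\<bar> * 1" by (intro mult_left_mono) auto
    then show ?thesis using il by (simp add: abs_mult)
  qed
  ultimately show ?thesis using il unfolding P_def by simp
qed

lemma rhbs_mean_dyadic_lipschitz:
  "0 < y \<Longrightarrow> 0 < z \<Longrightarrow> z \<le> 2 * y \<Longrightarrow> y \<le> 2 * z \<Longrightarrow>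
   \<bar>rhbs_mean (ceil_log2 y) y - rhbs_mean (ceil_log2 z) z\<bar> \<le> 4 * \<bar>z - y\<bar> / min y z"
  by (rule dyadic_lipschitz_sym[OF rhbs_mean_lipschitz])
    (auto simp: rhbs_mean_def two_powr_succ simp del: of_int_add)

lemma rhbs_bias_dyadic_lipschitz:
  "0 < y \<Longrightarrow> 0 < z \<Longrightarrow> z \<le> 2 * y \<Longrightarrow> y \<le> 2 * z \<Longrightarrow>
   \<bar>rhbs_bias (ceil_log2 y) y - rhbs_bias (ceil_log2 z) z\<bar> \<le> 4 * \<bar>z - y\<bar> / min y z"
  by (rule dyadic_lipschitz_sym[OF rhbs_bias_lipschitz])
    (auto simp: rhbs_bias_def two_powr_succ simp del: of_int_add)

lemma rhbs_mean_bounds: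
  assumes "y > 0"
  shows "real_of_int (ceil_log2 y) - 1 < rhbs_mean (ceil_log2 y) y" "rhbs_mean (ceil_log2 y) y \<le> ceil_log2 y"
  using ceil_log2_ratio_bounds[OF assms] unfolding rhbs_mean_def by auto

lemma rhbs_bias_bounds:
  assumes "y > 0" shows "0 \<le> rhbs_bias (ceil_log2 y) y" "rhbs_bias (ceil_log2 y) y \<le> 1"
proof -
  define a where "a = 2 powr (ceil_log2 y) / y"
  have a: "1 \<le> a" "a < 2" using ceil_log2_ratio_bounds[OF assms] unfolding a_def by auto
  have "rhbs_bias (ceil_log2 y) y = (a - 1) * (2 - a)" unfolding rhbs_bias_def a_def by simp
  moreover have "0 \<le> (a - 1) * (2 - a)" using a by simp
  moreover have "(a - 1) * (2 - a) \<le> 1 * 1" using a by (intro mult_mono) auto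
  ultimately show "0 \<le> rhbs_bias (ceil_log2 y) y" "rhbs_bias (ceil_log2 y) y \<le> 1" by auto
qed

lemma rhbs_mixture_near_ceil_log2:
  assumes "y > 0" "0 \<le> \<mu>" "\<mu> \<le> 1"
  shows "\<bar>rhbs_mean (ceil_log2 y) y - \<mu> * rhbs_bias (ceil_log2 y) y - ceil_log2 y\<bar> \<le> 2"
proof -
  have "0 \<le> \<mu> * rhbs_bias (ceil_log2 y) y" "\<mu> * rhbs_bias (ceil_log2 y) y \<le> 1"
    using rhbs_bias_bounds[OF assms(1)] assms by (auto intro: mult_le_one)
  then show ?thesis using rhbs_mean_bounds[OF assms(1)] by linarith
qed

text \<open>mu_lim is the limit of the ratio (b_{r-1} - b_r) / (b_{r-1} + b_r) when b_{r-1} / b_r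
  tends to sqrt 2.\<close>
definition mu_lim :: real where
  "mu_lim = 3 - 2 * sqrt 2"

lemma mu_lim_eq: "mu_lim = (sqrt 2 - 1) / (sqrt 2 + 1)"
proof -
  have "(3 - 2 * sqrt 2) * (sqrt 2 + 1) = sqrt 2 - 1" by (simp add: algebra_simps)
  moreover have "sqrt 2 + 1 > 0" using real_sqrt_ge_zero[of 2] by linarith
  ultimately show ?thesis unfolding mu_lim_def by (simp add: field_simps)
qed

lemma mu_lim_bounds: "0 < mu_lim" "mu_lim < 1"
  using sqrt2_bounds unfolding mu_lim_def by auto

definition Acal_lim :: "real \<Rightarrow> real" where
  "Acal_lim w = rhbs_mean (ceil_log2 w) w - mu_lim * rhbs_bias (ceil_log2 w) w"

lemma Acal_lim_near_ceil_log2: assumes "y > 0" shows "\<bar>Acal_lim y - ceil_log2 y\<bar> \<le> 2"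
  unfolding Acal_lim_def using rhbs_mixture_near_ceil_log2[OF assms] mu_lim_bounds by simp

lemma Acal_lim_eq:
  assumes "w > 0"
  shows "Acal_lim w = real_of_int \<lceil>log 2 w\<rceil> + 7 - 4 * sqrt 2
                 - (10 - 6 * sqrt 2) / px w + (3 - 2 * sqrt 2) / (px w)\<^sup>2"
proof -
  define a where "a = 2 powr (ceil_log2 w) / w"
  have px: "1 / px w = a" unfolding px_def a_def ceil_log2_def by simp
  have "Acal_lim w = real_of_int (ceil_log2 w) + 1 - a - (3 - 2 * sqrt 2) * ((a - 1) * (2 - a))"
    unfolding Acal_lim_def rhbs_mean_def rhbs_bias_def mu_lim_def a_def by simp
  also have "\<dots> = real_of_int (ceil_log2 w) + 7 - 4 * sqrt 2 - (10 - 6 * sqrt 2) * a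
      + (3 - 2 * sqrt 2) * a\<^sup>2"
    by (simp add: algebra_simps power2_eq_square)
  finally show ?thesis
    unfolding ceil_log2_def px[symmetric] by (simp add: divide_inverse power_inverse)
qed

definition lim_profile :: "real \<Rightarrow> real" where
  "lim_profile a = 1 - a - mu_lim * ((a - 1) * (2 - a))"

lemma Acal_lim_scaled:
  assumes "1/2 < f" "f \<le> 1"
  shows "Acal_lim (f * 2 powr (real_of_int j)) = real_of_int j + lim_profile (1 / f)"
proof -
  have P0: "(2::real) powr (real_of_int j) > 0" by simp
  have k: "ceil_log2 (f * 2 powr (real_of_int j)) = j"
    using assms P0 by (intro ceil_log2_unique) (simp_all add: two_powr_pred)
  have q: "2 powr (real_of_int j) / (f * 2 powr (real_of_int j)) = 1 / f" using P0 by simp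
  show ?thesis unfolding Acal_lim_def rhbs_mean_def rhbs_bias_def lim_profile_def k q
    by (simp add: algebra_simps)
qed

lemma lim_profile_bound: assumes "1 \<le> a" "a \<le> 2" shows "\<bar>lim_profile a\<bar> \<le> 2"
proof -
  have "0 \<le> (a - 1) * (2 - a)" using assms by simp
  moreover have "(a - 1) * (2 - a) \<le> 1 * 1" using assms by (intro mult_mono) auto
  ultimately have "0 \<le> mu_lim * ((a - 1) * (2 - a))" "mu_lim * ((a - 1) * (2 - a)) \<le> 1"
    using mu_lim_bounds by (auto intro: mult_le_one)
  then show ?thesis unfolding lim_profile_def using assms by linarith
qed

section \<open>Geometry of Step 2\<close>

text \<open>tail i r = i - ceil (alpha r * i) is the number of elements of T to the right of the
  r-th probe of Step 2 (see cidx_eq).\<close>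
definition tail_real :: "nat \<Rightarrow> nat \<Rightarrow> real" where
  "tail_real i r = real i * 2 powr (- real r / 2)"
definition tail :: "nat \<Rightarrow> nat \<Rightarrow> nat" where
  "tail i r = nat \<lfloor>tail_real i r\<rfloor>"

lemma tail_real_nonneg: "0 \<le> tail_real i r" unfolding tail_real_def by simp

lemma tail_real_le: "tail_real i r \<le> real i"
proof -
  have "2 powr (- real r / 2) \<le> 2 powr 0" by (intro powr_mono) auto
  then show ?thesis unfolding tail_real_def by (simp add: mult_left_le)
qed

lemma tail_real_0: "tail_real i 0 = real i" unfolding tail_real_def by simp
lemma tail_0: "tail i 0 = i" unfolding tail_def tail_real_0 by simp

lemma tail_real_mono: "r \<le> r' \<Longrightarrow> tail_real i r' \<le> tail_real i r"
  unfolding tail_real_def by (intro mult_left_mono powr_mono) auto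

lemma tail_mono: "r \<le> r' \<Longrightarrow> tail i r' \<le> tail i r"
  unfolding tail_def using tail_real_mono[of r r' i] by (intro nat_mono floor_mono) auto

lemma tail_le: "tail i r \<le> i"
  using tail_mono[of 0 r i] tail_0 by simp

lemma real_tail: "real (tail i r) = of_int \<lfloor>tail_real i r\<rfloor>"
  unfolding tail_def using tail_real_nonneg[of i r] by simp

lemma tail_bounds: "real (tail i r) \<le> tail_real i r" "tail_real i r < real (tail i r) + 1"
  unfolding real_tail by linarith+

lemma tail_real_prev: "1 \<le> r \<Longrightarrow> tail_real i (r - 1) = sqrt 2 * tail_real i r"
proof -
  assume r: "1 \<le> r"
  have e: "- real (r - 1) / 2 = - real r / 2 + 1/2" using r by (simp add: of_nat_diff field_simps)
  have "2 powr (- real (r - 1) / 2) = 2 powr (- real r / 2 + 1/2)" unfolding e ..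
  also have "\<dots> = 2 powr (- real r / 2) * 2 powr (1/2)" by (rule powr_add)
  finally have "2 powr (- real (r - 1) / 2) = 2 powr (- real r / 2) * 2 powr (1/2)" .
  moreover have "(2::real) powr (1/2) = sqrt 2" by (simp add: powr_half_sqrt)
  ultimately show ?thesis unfolding tail_real_def by simp
qed

lemma cidx_eq: "cidx i r = i - tail i r"
proof -
  have "alpha r * real i = real i - tail_real i r" unfolding alpha_def tail_real_def by (simp add: algebra_simps)
  then have "\<lceil>alpha r * real i\<rceil> = int i - \<lfloor>tail_real i r\<rfloor>"
    using ceiling_diff_of_int[of "- tail_real i r" "- int i"] by (simp add: ceiling_minus)
  moreover have "\<lfloor>tail_real i r\<rfloor> \<le> int i" using tail_real_le[of i r] by linarith
  moreover have "0 \<le> \<lfloor>tail_real i r\<rfloor>" using tail_real_nonneg[of i r] by simp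
  ultimately show ?thesis unfolding cidx_def tail_def by (simp add: nat_diff_distrib)
qed

lemma tail_real_ge1: assumes "1 \<le> i" "r \<le> rmax i" shows "1 \<le> tail_real i r"
proof -
  have h: "0 \<le> 2 * log 2 (real i)" using assms by simp
  have "int r \<le> \<lfloor>2 * log 2 (real i)\<rfloor>" using assms(2) h unfolding rmax_def by (simp add: le_nat_iff)
  then have "real r \<le> 2 * log 2 (real i)" by (simp add: le_floor_iff)
  then have hl: "real r / 2 \<le> log 2 (real i)" by simp
  have "2 powr (real r / 2) \<le> real i" using le_log_iff[of 2 "real i" "real r / 2"] assms hl by simp
  then show ?thesis unfolding tail_real_def using assms by (simp add: powr_minus divide_simps)
qed

lemma tail_real_rmax_lt: assumes "1 \<le> i" shows "tail_real i (rmax i) < sqrt 2"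
proof -
  have h: "0 \<le> 2 * log 2 (real i)" using assms by simp
  have "2 * log 2 (real i) < real (rmax i) + 1" unfolding rmax_def
    using h by (simp add: of_nat_nat)
  then have hl: "log 2 (real i) < (real (rmax i) + 1) / 2" by simp
  have "real i < 2 powr ((real (rmax i) + 1) / 2)"
    using log_less_iff[of 2 "real i" "(real (rmax i) + 1) / 2"] assms hl by simp
  also have "\<dots> = 2 powr (real (rmax i) / 2) * 2 powr (1/2)" by (simp add: powr_add[symmetric] add_divide_distrib)
  finally have "real i < 2 powr (real (rmax i) / 2) * sqrt 2" by (simp add: powr_half_sqrt)
  then show ?thesis unfolding tail_real_def by (simp add: powr_minus divide_simps mult.commute)
qed

lemma tail_rmax: assumes "1 \<le> i" shows "tail i (rmax i) = 1"
proof -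
  have "tail_real i (rmax i) < 2" using tail_real_rmax_lt[OF assms] sqrt2_bounds by linarith
  moreover have "1 \<le> tail_real i (rmax i)" using tail_real_ge1[OF assms] by simp
  ultimately show ?thesis unfolding tail_def by linarith
qed

lemma tail_ge1: "1 \<le> i \<Longrightarrow> r \<le> rmax i \<Longrightarrow> 1 \<le> tail i r"
  using tail_real_ge1[of i r] unfolding tail_def by linarith

lemma step2_eq:
  assumes i: "1 \<le> i" and r: "1 \<le> r" "r \<le> rmax i"
    and l: "i - tail i (r - 1) < l" "l \<le> i - tail i r"
  shows "step2 i l = r"
  unfolding step2_def
proof (rule Least_equality)
  show "1 \<le> r \<and> r \<le> rmax i \<and> l \<le> cidx i r" using r l by (simp add: cidx_eq)
next
  fix y assume y: "1 \<le> y \<and> y \<le> rmax i \<and> l \<le> cidx i y"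
  show "r \<le> y"
  proof (rule ccontr)
    assume "\<not> r \<le> y"
    then have "y \<le> r - 1" by simp
    then have "tail i (r - 1) \<le> tail i y" by (rule tail_mono)
    then show False using y l tail_le[of i y] tail_le[of i "r-1"] unfolding cidx_eq by linarith
  qed
qed

lemma positions_eq:
  assumes i: "1 \<le> i" and r: "1 \<le> r" "r \<le> rmax i"
  shows "positions_r i r = {i - tail i (r - 1) + 1 .. i - tail i r}"
proof (intro set_eqI iffI)
  fix l assume "l \<in> positions_r i r"
  then have l: "1 \<le> l" "l \<le> i - 1" "step2 i l = r" unfolding positions_r_def by auto
  have ex: "\<exists>r'. 1 \<le> r' \<and> r' \<le> rmax i \<and> l \<le> cidx i r'"
  proof (intro exI conjI)
    show "1 \<le> rmax i" using r by simp
    show "rmax i \<le> rmax i" by simp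
    show "l \<le> cidx i (rmax i)" using l tail_rmax[OF i] by (simp add: cidx_eq)
  qed
  have P: "1 \<le> r \<and> r \<le> rmax i \<and> l \<le> cidx i r"
    using LeastI_ex[OF ex] l(3) unfolding step2_def by simp
  have lo: "i - tail i (r - 1) < l"
  proof (cases "r = 1")
    case True then show ?thesis using l tail_0[of i] by simp
  next
    case False
    have "\<not> (1 \<le> r - 1 \<and> r - 1 \<le> rmax i \<and> l \<le> cidx i (r - 1))"
    proof
      assume "1 \<le> r - 1 \<and> r - 1 \<le> rmax i \<and> l \<le> cidx i (r - 1)"
      then have "step2 i l \<le> r - 1" unfolding step2_def by (rule Least_le)
      then show False using l(3) r by simp
    qed
    moreover have "1 \<le> r - 1" "r - 1 \<le> rmax i" using False r by auto
    ultimately show ?thesis by (auto simp add: cidx_eq not_le)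
  qed
  show "l \<in> {i - tail i (r - 1) + 1 .. i - tail i r}" using P lo by (simp add: cidx_eq)
next
  fix l assume l: "l \<in> {i - tail i (r - 1) + 1 .. i - tail i r}"
  have "1 \<le> tail i r" using tail_ge1 i r by simp
  then have "1 \<le> l" "l \<le> i - 1" using l by auto
  moreover have "step2 i l = r" using l by (intro step2_eq[OF i r]) auto
  ultimately show "l \<in> positions_r i r" unfolding positions_r_def by simp
qed

section \<open>Exact average cost of Step 3\<close>

lemma sum_of_nat_atLeastLessThan:
  "a \<le> c \<Longrightarrow> (\<Sum>t\<in>{a..<c}. real t) = (real c * (real c - 1) - real a * (real a - 1)) / 2"
  by (induction c rule: dec_induct) (simp_all add: field_simps)

lemma real_choose_two: "real (i choose 2) = real i * (real i - 1) / 2"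
proof (cases i)
  case 0 then show ?thesis by simp
next
  case (Suc k)
  have "i choose 2 = i * (i - 1) div 2" by (rule choose_two)
  moreover have "even (i * (i - 1))" by auto
  ultimately have "real (i choose 2) = real (i * (i - 1)) / 2" by (simp add: real_of_nat_div)
  then show ?thesis using Suc by (simp add: of_nat_diff algebra_simps)
qed

lemma sum_reflect_atLeastAtMost:
  fixes i b B :: nat
  assumes "b \<le> B" "B \<le> i" "1 \<le> b"
  shows "(\<Sum>l\<in>{i - B + 1 .. i - b}. f (i - l)) = (\<Sum>t\<in>{b..<B}. f t)"
  using assms by (intro sum.reindex_bij_witness[where i="\<lambda>t. i - t" and j="\<lambda>l. i - l"]) auto

lemma rhbs_real:
  assumes "1 \<le> j" "j \<le> n"
  shows "real (rhbs (n - 1) j) = real (ceillog2 n) - (if j + n \<le> 2 ^ ceillog2 n then 1 else 0)"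
  using rhbs_closed[OF assms] by (cases "j + n \<le> 2 ^ ceillog2 n") (simp_all add: of_nat_diff)

lemma sum_weighted_rhbs:
  assumes bB: "1 \<le> b" "b < B"
  defines "n \<equiv> B - b"
  defines "K \<equiv> ceillog2 n"
  shows "(\<Sum>t\<in>{b..<B}. real t * real (rhbs (n - 1) (B - t)))
     = real K * (\<Sum>t\<in>{b..<B}. real t) - (\<Sum>t\<in>{B - (2^K - n)..<B}. real t)"
proof -
  have n1: "1 \<le> n" using bB unfolding n_def by simp
  have up: "n \<le> 2^K" and lo: "2^K < 2 * n"
    unfolding K_def using n1 by (simp_all add: le_two_power_ceillog2 two_power_ceillog2_gt)
  have "(\<Sum>t\<in>{b..<B}. real t * real (rhbs (n - 1) (B - t)))
      = (\<Sum>t\<in>{b..<B}. real K * real t - (if B - t + n \<le> 2^K then real t else 0))"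
  proof (rule sum.cong)
    fix t assume "t \<in> {b..<B}"
    then have eq: "real (rhbs (n - 1) (B - t)) = real K - (if B - t + n \<le> 2^K then 1 else 0)"
      unfolding K_def using n1 by (intro rhbs_real) (auto simp: n_def)
    show "real t * real (rhbs (n - 1) (B - t))
        = real K * real t - (if B - t + n \<le> 2^K then real t else 0)"
      unfolding eq by (simp add: algebra_simps)
  qed simp
  also have "\<dots> = real K * (\<Sum>t\<in>{b..<B}. real t) - (\<Sum>t\<in>{b..<B}. (if B - t + n \<le> 2^K then real t else 0))"
    by (simp add: sum_subtractf sum_distrib_left)
  also have "(\<Sum>t\<in>{b..<B}. (if B - t + n \<le> 2^K then real t else 0))
      = (\<Sum>t\<in>{t\<in>{b..<B}. B - t + n \<le> 2^K}. real t)"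
    by (rule sum.inter_filter[symmetric]) simp
  also have "{t\<in>{b..<B}. B - t + n \<le> 2^K} = {B - (2^K - n)..<B}"
    using up lo unfolding n_def by auto
  finally show ?thesis .
qed

text \<open>Gap B - t has weight t, so the 2^K - n gaps reached with K - 1 comparisons
  are the heaviest ones.\<close>
lemma rhbs_weighted_average:
  fixes b B :: nat
  assumes b: "1 \<le> b" "b < B"
  defines "n \<equiv> B - b"
  shows "(\<Sum>t\<in>{b..<B}. real t * real (rhbs (n - 1) (B - t))) / (\<Sum>t\<in>{b..<B}. real t)
     = rhbs_mean (ceil_log2 n) n - n / (real B + real b - 1) * rhbs_bias (ceil_log2 n) n"
proof -
  define K where "K = ceillog2 n"
  define S where "S = real (2^K - n)"
  define D where "D = real B + real b - 1"
  have n1: "1 \<le> n" using b unfolding n_def by simp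
  have up: "n \<le> 2^K" and lo: "2^K < 2 * n"
    unfolding K_def using n1 by (simp_all add: le_two_power_ceillog2 two_power_ceillog2_gt)
  have S: "S = 2^K - real n" unfolding S_def using up by (simp add: of_nat_diff)
  have all: "(\<Sum>t\<in>{b..<B}. real t) = real n * D / 2"
    using b unfolding n_def D_def by (simp add: sum_of_nat_atLeastLessThan of_nat_diff algebra_simps)
  have heavy: "(\<Sum>t\<in>{B - (2^K - n)..<B}. real t) = S * (real n + D - S) / 2"
  proof -
    have "2^K - n \<le> B" using up lo b unfolding n_def by simp
    then have "(\<Sum>t\<in>{B - (2^K - n)..<B}. real t)
        = (real B * (real B - 1) - (real B - S) * (real B - S - 1)) / 2"
      unfolding S_def by (simp add: sum_of_nat_atLeastLessThan of_nat_diff)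
    moreover have nD: "real n + D = 2 * real B - 1"
      using b unfolding n_def D_def by (simp add: of_nat_diff)
    have "S * (real n + D - S) / 2 = (real B * (real B - 1) - (real B - S) * (real B - S - 1)) / 2"
      unfolding nD by (simp add: algebra_simps)
    ultimately show ?thesis by simp
  qed
  have kn: "ceil_log2 (real n) = int K" unfolding K_def by (rule ceil_log2_of_nat[OF n1])
  have pow: "(2::real) powr (real_of_int (int K)) = real n + S"
    unfolding S by (simp add: powr_realpow)
  have "real n > 0" "D > 0" using n1 b unfolding D_def by auto
  then have "(real K * (real n * D / 2) - S * (real n + D - S) / 2) / (real n * D / 2)
      = real K + 1 - (real n + S) / real n - real n / D * (((real n + S) / real n - 1) * (2 - (real n + S) / real n))"
    by (simp add: field_simps)
  then show ?thesis
    unfolding sum_weighted_rhbs[OF b, folded n_def K_def] all heavy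
    unfolding rhbs_mean_def rhbs_bias_def kn pow D_def[symmetric] by simp
qed

lemma PrR_eq_sum:
  assumes i: "1 \<le> i" and r: "1 \<le> r" "r \<le> rmax i"
  shows "PrR i r = (\<Sum>t\<in>{tail i r..<tail i (r - 1)}. real t) / real (i choose 2)"
proof -
  have "tail i r \<le> tail i (r - 1)" "tail i (r - 1) \<le> i" "1 \<le> tail i r"
    using tail_mono[of "r - 1" r i] tail_le tail_ge1[OF i r(2)] by auto
  then show ?thesis
    unfolding PrR_def positions_eq[OF i r] posprob_def
    using sum_reflect_atLeastAtMost[where f="\<lambda>t. real t / real (i choose 2)"]
    by (simp add: sum_divide_distrib)
qed

lemma PrR_eq:
  assumes i: "2 \<le> i" and r: "1 \<le> r" "r \<le> rmax i"
  defines "B \<equiv> real (tail i (r - 1))" and "b \<equiv> real (tail i r)"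
  shows "PrR i r = (B * (B - 1) - b * (b - 1)) / (real i * (real i - 1))"
proof -
  have i1: "1 \<le> i" using i by simp
  have "tail i r \<le> tail i (r - 1)" using tail_mono[of "r - 1" r i] by simp
  then have "PrR i r = ((B * (B - 1) - b * (b - 1)) / 2) / (real i * (real i - 1) / 2)"
    unfolding PrR_eq_sum[OF i1 r] real_choose_two B_def b_def
    by (simp add: sum_of_nat_atLeastLessThan)
  also have "\<dots> = (B * (B - 1) - b * (b - 1)) / (real i * (real i - 1))"
    using i by (simp add: field_simps)
  finally show ?thesis .
qed

lemma step3_eq:
  assumes i: "1 \<le> i" and r: "1 \<le> r" "r \<le> rmax i" and l: "l \<in> positions_r i r"
  shows "step3 i l = rhbs (tail i (r - 1) - tail i r - 1) (tail i (r - 1) - (i - l))"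
proof -
  have l': "i - tail i (r - 1) < l" "l \<le> i - tail i r" using l unfolding positions_eq[OF i r] by auto
  have "tail i (r - 1) \<le> i" "tail i r \<le> tail i (r - 1)" using tail_le tail_mono[of "r - 1" r i] by auto
  then show ?thesis
    using step2_eq[OF i r l'] l' unfolding step3_def Let_def cidx_eq by (simp add: diff_diff_add ac_simps)
qed

lemma Acal_eq:
  assumes i: "2 \<le> i" and r: "1 \<le> r" "r \<le> rmax i" and nb: "tail i r < tail i (r - 1)"
  defines "B \<equiv> tail i (r - 1)" and "b \<equiv> tail i r"
  defines "n \<equiv> real (B - b)"
  shows "Acal i r = rhbs_mean (ceil_log2 n) n - n / (real B + real b - 1) * rhbs_bias (ceil_log2 n) n"
proof -
  have i1: "1 \<le> i" using i by simp
  have b: "1 \<le> b" "b < B" "B \<le> i" using tail_ge1[OF i1 r(2)] nb tail_le unfolding B_def b_def by auto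
  define C where "C = real (i choose 2)"
  have C: "C > 0" unfolding C_def real_choose_two using i by simp
  have "(\<Sum>l\<in>positions_r i r. posprob i l * real (step3 i l))
      = (\<Sum>l\<in>{i - B + 1 .. i - b}. (\<lambda>t. real t / C * real (rhbs (B - b - 1) (B - t))) (i - l))"
    unfolding positions_eq[OF i1 r] posprob_def C_def
    using step3_eq[OF i1 r] positions_eq[OF i1 r] unfolding B_def b_def by (intro sum.cong) auto
  also have "\<dots> = (\<Sum>t\<in>{b..<B}. real t * real (rhbs (B - b - 1) (B - t))) / C"
    using b by (subst sum_reflect_atLeastAtMost) (auto simp: sum_divide_distrib)
  finally have "Acal i r = (\<Sum>t\<in>{b..<B}. real t * real (rhbs (B - b - 1) (B - t))) / (\<Sum>t\<in>{b..<B}. real t)"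
    unfolding Acal_def PrR_eq_sum[OF i1 r] B_def[symmetric] b_def[symmetric] C_def[symmetric] using C by simp
  then show ?thesis unfolding n_def using rhbs_weighted_average[OF b(1,2)] by simp
qed

section \<open>Approximation for fixed r\<close>

lemma ceil_log2_small_range:
  assumes "1/4 < y" "y \<le> 16" shows "-1 \<le> ceil_log2 y" "ceil_log2 y \<le> 4"
proof -
  have "2 powr (real_of_int (-2)) < y" using assms by (simp add: powr_minus)
  then show "-1 \<le> ceil_log2 y" using ceil_log2_gt[of y "-2"] assms by simp
  have "y \<le> 2 powr (real_of_int 4)" using assms by simp
  then show "ceil_log2 y \<le> 4" using ceil_log2_le[of y 4] assms by simp
qed

lemma rhbs_mixture_near_Acal_lim:
  assumes n: "1 \<le> n" and w: "8 \<le> w" and nw: "\<bar>n - w\<bar> < 1"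
    and \<mu>: "0 \<le> \<mu>" "\<mu> \<le> 1" "\<bar>\<mu> - mu_lim\<bar> \<le> 8 / w"
  shows "\<bar>rhbs_mean (ceil_log2 n) n - \<mu> * rhbs_bias (ceil_log2 n) n - Acal_lim w\<bar> \<le> 24 / w"
proof -
  have "w / 2 \<le> min n w" "0 < min n w" using nw w n by (auto simp: min_def abs_less_iff)
  then have "4 * \<bar>w - n\<bar> / min n w \<le> 4 * 1 / (w / 2)"
    using nw by (intro frac_le) (auto simp: abs_minus_commute)
  then have lip: "4 * \<bar>w - n\<bar> / min n w \<le> 8 / w" by simp
  have "n \<le> 2 * w" "w \<le> 2 * n" using nw w by linarith+
  then have dm: "\<bar>rhbs_mean (ceil_log2 n) n - rhbs_mean (ceil_log2 w) w\<bar> \<le> 8 / w"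
    and db: "\<bar>rhbs_bias (ceil_log2 n) n - rhbs_bias (ceil_log2 w) w\<bar> \<le> 8 / w"
    using rhbs_mean_dyadic_lipschitz[of n w] rhbs_bias_dyadic_lipschitz[of n w] n w lip by auto
  have "\<bar>\<mu> * (rhbs_bias (ceil_log2 n) n - rhbs_bias (ceil_log2 w) w)\<bar> \<le> 1 * (8 / w)"
    unfolding abs_mult using \<mu> db by (intro mult_mono) auto
  moreover have "\<bar>rhbs_bias (ceil_log2 w) w * (\<mu> - mu_lim)\<bar> \<le> 1 * (8 / w)"
    unfolding abs_mult using rhbs_bias_bounds[of w] w \<mu> by (intro mult_mono) auto
  moreover have "rhbs_mean (ceil_log2 n) n - \<mu> * rhbs_bias (ceil_log2 n) n - Acal_lim w
      = (rhbs_mean (ceil_log2 n) n - rhbs_mean (ceil_log2 w) w)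
        - \<mu> * (rhbs_bias (ceil_log2 n) n - rhbs_bias (ceil_log2 w) w)
        - rhbs_bias (ceil_log2 w) w * (\<mu> - mu_lim)"
    unfolding Acal_lim_def by (simp add: algebra_simps)
  ultimately show ?thesis using dm by simp
qed

text \<open>With b = floor x and B = floor (sqrt 2 x), both n = B - b and D = B + b - 1 are within
  bounded distance of (sqrt 2 - 1) x and (sqrt 2 + 1) x, whose ratio is mu_lim.\<close>
lemma weight_ratio_near_mu_lim:
  fixes x :: real and b B :: nat
  assumes w8: "8 \<le> (sqrt 2 - 1) * x" and b: "real b \<le> x" "x < real b + 1"
    and B: "real B \<le> sqrt 2 * x" "sqrt 2 * x < real B + 1" and bB: "b < B"
  shows "\<bar>real (B - b) / (real B + real b - 1) - mu_lim\<bar> \<le> 8 / ((sqrt 2 - 1) * x)"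
proof -
  define n where "n = real (B - b)"
  define w where "w = (sqrt 2 - 1) * x"
  define D where "D = real B + real b - 1"
  define S where "S = sqrt 2 * x + x"
  have w: "8 \<le> w" using w8 unfolding w_def .
  have "0 \<le> x" using b(1) of_nat_0_le_iff order_trans by blast
  moreover have "x \<noteq> 0" using w unfolding w_def by auto
  ultimately have x0: "x > 0" by simp
  have nw: "\<bar>n - w\<bar> < 1"
    unfolding n_def w_def using b B bB by (simp add: of_nat_diff algebra_simps abs_less_iff)
  have S0: "S \<ge> w" unfolding S_def w_def using x0 by (simp add: algebra_simps)
  have mu: "mu_lim = w / S"
  proof -
    have "w / S = ((sqrt 2 - 1) * x) / ((sqrt 2 + 1) * x)" unfolding w_def S_def by (simp add: algebra_simps)
    then show ?thesis using x0 mu_lim_eq by simp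
  qed
  have DS: "S - 3 < D" "D \<le> S - 1" unfolding D_def S_def using b B by linarith+
  have Dpos: "D \<ge> S / 2" "D > 0" "S > 0" using DS S0 w by linarith+
  have "\<bar>(n - w) * S + w * (S - D)\<bar> \<le> \<bar>(n - w) * S\<bar> + \<bar>w * (S - D)\<bar>" by (rule abs_triangle_ineq)
  also have "\<dots> = \<bar>n - w\<bar> * S + w * \<bar>S - D\<bar>" using Dpos w by (simp add: abs_mult)
  also have "\<dots> \<le> 1 * S + w * 3"
    using nw DS Dpos w by (intro add_mono mult_mono) auto
  also have "\<dots> \<le> 8 * D" using S0 Dpos by simp
  finally have num: "\<bar>(n - w) * S + w * (S - D)\<bar> \<le> 8 * D" .
  have "\<bar>n / D - mu_lim\<bar> = \<bar>(n - w) * S + w * (S - D)\<bar> / (D * S)"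
    unfolding mu using Dpos by (simp add: field_simps abs_divide)
  also have "\<dots> \<le> 8 * D / (D * S)" using num Dpos by (intro divide_right_mono) auto
  also have "\<dots> = 8 / S" using Dpos by simp
  also have "\<dots> \<le> 8 / w" using S0 w by (intro divide_left_mono) auto
  finally show ?thesis unfolding n_def D_def w_def .
qed

lemma Acal_lim_approx:
  fixes x :: real and b B :: nat
  assumes x1: "1 \<le> x" and b: "real b \<le> x" "x < real b + 1"
    and B: "real B \<le> sqrt 2 * x" "sqrt 2 * x < real B + 1" and bB: "b < B"
  defines "n \<equiv> real (B - b)"
  shows "\<bar>rhbs_mean (ceil_log2 n) n - n / (real B + real b - 1) * rhbs_bias (ceil_log2 n) n
          - Acal_lim ((sqrt 2 - 1) * x)\<bar> \<le> 80 / ((sqrt 2 - 1) * x)"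
proof -
  define w where "w = (sqrt 2 - 1) * x"
  define \<mu> where "\<mu> = n / (real B + real b - 1)"
  have n1: "1 \<le> n" unfolding n_def using bB by (simp add: of_nat_diff)
  have w0: "2/5 \<le> w" unfolding w_def using mult_mono[of "2/5" "sqrt 2 - 1" 1 x] sqrt2_bounds x1 by simp
  have nw: "\<bar>n - w\<bar> < 1" unfolding n_def w_def using b B bB by (simp add: of_nat_diff algebra_simps abs_less_iff)
  have "0 < real b" using x1 b by linarith
  then have "1 \<le> real b" by simp
  then have mu: "0 \<le> \<mu>" "\<mu> \<le> 1" unfolding \<mu>_def n_def using bB by (auto simp: of_nat_diff)
  have "\<bar>rhbs_mean (ceil_log2 n) n - \<mu> * rhbs_bias (ceil_log2 n) n - Acal_lim w\<bar> \<le> 80 / w"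
  proof (cases "w < 8")
    case True
    have "\<bar>rhbs_mean (ceil_log2 n) n - \<mu> * rhbs_bias (ceil_log2 n) n - ceil_log2 n\<bar> \<le> 2"
      "\<bar>Acal_lim w - ceil_log2 w\<bar> \<le> 2"
      using rhbs_mixture_near_ceil_log2[OF _ mu] Acal_lim_near_ceil_log2 n1 w0 by auto
    moreover have "-1 \<le> ceil_log2 n" "ceil_log2 n \<le> 4" "-1 \<le> ceil_log2 w" "ceil_log2 w \<le> 4"
      using ceil_log2_small_range[of n] ceil_log2_small_range[of w] n1 nw w0 True by auto
    ultimately have "\<bar>rhbs_mean (ceil_log2 n) n - \<mu> * rhbs_bias (ceil_log2 n) n - Acal_lim w\<bar> \<le> 9"
      by linarith
    also have "9 \<le> 80 / w" using True w0 by (simp add: field_simps)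
    finally show ?thesis .
  next
    case False
    have "\<bar>\<mu> - mu_lim\<bar> \<le> 8 / w"
      unfolding \<mu>_def n_def w_def using False b B bB by (intro weight_ratio_near_mu_lim) (auto simp: w_def)
    then have "\<bar>rhbs_mean (ceil_log2 n) n - \<mu> * rhbs_bias (ceil_log2 n) n - Acal_lim w\<bar> \<le> 24 / w"
      using False n1 nw mu by (intro rhbs_mixture_near_Acal_lim) auto
    also have "\<dots> \<le> 80 / w" using w0 by (simp add: field_simps)
    finally show ?thesis .
  qed
  then show ?thesis unfolding w_def \<mu>_def by simp
qed

lemma wr_eq_tail_real: "wr i r = (sqrt 2 - 1) * tail_real i r"
  unfolding wr_def tail_real_def by simp

lemma tail_less_if_PrR_pos:
  assumes i: "1 \<le> i" and r: "1 \<le> r" "r \<le> rmax i" and P: "0 < PrR i r"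
  shows "tail i r < tail i (r - 1)"
proof (rule ccontr)
  assume "\<not> tail i r < tail i (r - 1)"
  then have "positions_r i r = {}" using positions_eq[OF i r] by auto
  then show False using P unfolding PrR_def by simp
qed

lemma Acal_near_Acal_lim:
  assumes i: "4 \<le> i" and r: "1 \<le> r" "r \<le> rmax i" and P: "0 < PrR i r"
  shows "\<bar>Acal i r - Acal_lim (wr i r)\<bar> \<le> 200 / tail_real i r"
proof -
  have i1: "1 \<le> i" using i by simp
  define x where "x = tail_real i r"
  have x1: "1 \<le> x" unfolding x_def by (rule tail_real_ge1[OF i1 r(2)])
  have i2: "2 \<le> i" using i by simp
  note bB = tail_less_if_PrR_pos[OF i1 r P]
  have "\<bar>Acal i r - Acal_lim (wr i r)\<bar> \<le> 80 / ((sqrt 2 - 1) * x)"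
    unfolding Acal_eq[OF i2 r bB] wr_eq_tail_real x_def
    using tail_bounds[of i r] tail_bounds[of i "r - 1"] tail_real_prev[OF r(1), of i] bB x1
    unfolding x_def by (intro Acal_lim_approx) auto
  also have "\<dots> \<le> 80 / ((2/5) * x)"
    using sqrt2_bounds x1 by (intro divide_left_mono mult_right_mono) auto
  finally show ?thesis unfolding x_def by simp
qed

section \<open>The limit formula along Step 2\<close>

lemma tail_real_even:
  fixes i m :: nat
  defines "p \<equiv> px (real i)" and "k \<equiv> ceil_log2 (real i)"
  shows "tail_real i (2 * m) = p * 2 powr (real_of_int (k - int m))"
proof -
  have "tail_real i (2 * m) = real i * 2 powr (- real m)" unfolding tail_real_def by simp
  also have "\<dots> = p * (2 powr (real_of_int k) * 2 powr (- real m))"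
    unfolding p_def k_def by (subst px_scale[of "real i"]) simp
  also have "2 powr (real_of_int k) * 2 powr (- real m) = 2 powr (real_of_int (k - int m))"
    by (simp add: powr_add[symmetric])
  finally show ?thesis .
qed

lemma tail_real_odd:
  fixes i m :: nat
  defines "p \<equiv> px (real i)" and "k \<equiv> ceil_log2 (real i)"
  shows "tail_real i (2 * m + 1) = sqrt 2 * (p * 2 powr (real_of_int (k - int m - 1)))"
proof -
  have e: "- real (2 * m + 1) / 2 = - real m - 1 + 1/2" by simp
  have "tail_real i (2 * m + 1) = real i * (2 powr (- real m - 1) * 2 powr (1/2))"
    unfolding tail_real_def e by (subst powr_add) simp
  also have "\<dots> = p * (2 powr (real_of_int k) * 2 powr (- real m - 1)) * sqrt 2"
    unfolding p_def k_def by (subst px_scale[of "real i"]) (simp add: powr_half_sqrt)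
  also have "2 powr (real_of_int k) * 2 powr (- real m - 1) = 2 powr (real_of_int (k - int m - 1))"
    by (simp add: powr_add[symmetric] algebra_simps)
  finally show ?thesis by simp
qed

text \<open>For p = px i in (1/2, 1], the factors (sqrt 2 - 1) p and (2 - sqrt 2) p of wr i r
  (for even and odd r) are brought back into (1/2, 1] by doubling once or twice; the shifts
  count the doublings.\<close>
definition even_shift :: "real \<Rightarrow> int" where
  "even_shift p = (if (sqrt 2 - 1) * p > 1/4 then 1 else 2)"

definition even_frac :: "real \<Rightarrow> real" where
  "even_frac p = (if (sqrt 2 - 1) * p > 1/4 then 2 * (sqrt 2 - 1) * p else 4 * (sqrt 2 - 1) * p)"

definition odd_shift :: "real \<Rightarrow> int" where
  "odd_shift p = (if (2 - sqrt 2) * p > 1/2 then 0 else 1)"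

definition odd_frac :: "real \<Rightarrow> real" where
  "odd_frac p = (if (2 - sqrt 2) * p > 1/2 then (2 - sqrt 2) * p else 2 * (2 - sqrt 2) * p)"

lemma even_frac_bounds: assumes "1/2 < p" "p \<le> 1" shows "1/2 < even_frac p" "even_frac p \<le> 1"
proof -
  define t where "t = sqrt 2 * p"
  have t: "t \<le> 17/12 * p" "7/5 * p \<le> t" "t \<le> 17/12"
    using sqrt2_bounds assms mult_mono[of "sqrt 2" "17/12" p 1] unfolding t_def
    by (auto intro: mult_right_mono)
  have "even_frac p = (if t - p > 1/4 then 2 * (t - p) else 4 * (t - p))"
    unfolding even_frac_def t_def by (simp add: algebra_simps)
  then show "1/2 < even_frac p" "even_frac p \<le> 1" using t assms by auto
qed

lemma odd_frac_bounds: assumes "1/2 < p" "p \<le> 1" shows "1/2 < odd_frac p" "odd_frac p \<le> 1"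
proof -
  define t where "t = sqrt 2 * p"
  have t: "t \<le> 17/12 * p" "7/5 * p \<le> t" "t \<le> 17/12"
    using sqrt2_bounds assms mult_mono[of "sqrt 2" "17/12" p 1] unfolding t_def
    by (auto intro: mult_right_mono)
  have "odd_frac p = (if 2 * p - t > 1/2 then 2 * p - t else 2 * (2 * p - t))"
    unfolding odd_frac_def t_def by (simp add: algebra_simps)
  then show "1/2 < odd_frac p" "odd_frac p \<le> 1" using t assms by auto
qed

lemma even_frac_scale:
  "(sqrt 2 - 1) * p * 2 powr (real_of_int j) = even_frac p * 2 powr (real_of_int (j - even_shift p))"
  unfolding even_frac_def even_shift_def by (auto simp: powr_diff)

lemma odd_frac_scale:
  "(2 - sqrt 2) * p * 2 powr (real_of_int j) = odd_frac p * 2 powr (real_of_int (j - odd_shift p))"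
  unfolding odd_frac_def odd_shift_def by (auto simp: powr_diff)

definition even_corr :: "real \<Rightarrow> real" where
  "even_corr p = - real_of_int (even_shift p) + lim_profile (1 / even_frac p)"

definition odd_corr :: "real \<Rightarrow> real" where
  "odd_corr p = - real_of_int (odd_shift p) + lim_profile (1 / odd_frac p)"

lemma Acal_lim_wr:
  assumes "1 \<le> i"
  defines "p \<equiv> px (real i)" and "k \<equiv> ceil_log2 (real i)"
  shows "Acal_lim (wr i r) = real_of_int k - real ((r + 1) div 2)
    + (if even r then even_corr p else odd_corr p)"
proof -
  have p: "1/2 < p" "p \<le> 1" unfolding p_def using px_bounds assms by auto
  show ?thesis
  proof (cases "even r")
    case True
    then obtain m where m: "r = 2 * m" by (auto elim: evenE)
    have "wr i r = even_frac p * 2 powr (real_of_int (k - int m - even_shift p))"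
      unfolding wr_eq_tail_real m tail_real_even p_def[symmetric] k_def[symmetric]
      using even_frac_scale[of p "k - int m"] by (simp add: mult.assoc)
    then have "Acal_lim (wr i r) = real_of_int (k - int m - even_shift p) + lim_profile (1 / even_frac p)"
      by (simp only: Acal_lim_scaled[OF even_frac_bounds[OF p]])
    then show ?thesis using True unfolding m even_corr_def by simp
  next
    case False
    then obtain m where m: "r = 2 * m + 1" by (auto elim: oddE)
    have "wr i r = (2 - sqrt 2) * p * 2 powr (real_of_int (k - int m - 1))"
      unfolding wr_eq_tail_real m tail_real_odd p_def[symmetric] k_def[symmetric]
      by (simp add: algebra_simps)
    also have "\<dots> = odd_frac p * 2 powr (real_of_int (k - int m - 1 - odd_shift p))"
      by (rule odd_frac_scale)
    finally have "wr i r = odd_frac p * 2 powr (real_of_int (k - int m - 1 - odd_shift p))" .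
    then have "Acal_lim (wr i r) = real_of_int (k - int m - 1 - odd_shift p) + lim_profile (1 / odd_frac p)"
      by (simp only: Acal_lim_scaled[OF odd_frac_bounds[OF p]])
    then show ?thesis using False unfolding m odd_corr_def by simp
  qed
qed

lemma even_corr_bound: assumes "1/2 < p" "p \<le> 1" shows "\<bar>even_corr p\<bar> \<le> 4"
proof -
  have "1 \<le> 1 / even_frac p" "1 / even_frac p \<le> 2" using even_frac_bounds[OF assms] by (auto simp: field_simps)
  then have "\<bar>lim_profile (1 / even_frac p)\<bar> \<le> 2" by (rule lim_profile_bound)
  then show ?thesis unfolding even_corr_def even_shift_def by auto
qed

lemma odd_corr_bound: assumes "1/2 < p" "p \<le> 1" shows "\<bar>odd_corr p\<bar> \<le> 4"
proof -
  have "1 \<le> 1 / odd_frac p" "1 / odd_frac p \<le> 2" using odd_frac_bounds[OF assms] by (auto simp: field_simps)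
  then have "\<bar>lim_profile (1 / odd_frac p)\<bar> \<le> 2" by (rule lim_profile_bound)
  then show ?thesis unfolding odd_corr_def odd_shift_def by auto
qed

lemma dyadic_level_sum_even:
  fixes k u v :: real
  defines "L \<equiv> k + (2 * v + u) / 3 - 4 / 3"
  shows "(\<Sum>r\<in>{1..2*M}. (1/2)^r * (k - real ((r + 1) div 2) + (if even r then u else v)))
     = L - (1/4)^M * (L - real M)"
proof (induction M)
  case 0 then show ?case by simp
next
  case (Suc M)
  have e: "{1..2 * Suc M} = insert (2*M+2) (insert (2*M+1) {1..2*M})" by auto
  have p: "(1/2::real)^(2*M+1) = (1/4)^M / 2" "(1/2::real)^(2*M+2) = (1/4)^M / 4"
    by (simp_all add: power_mult power_add power2_eq_square)
  have d: "(2*M+1+1) div 2 = M + 1" "(2*M+2+1) div 2 = M + 1" by simp_all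
  have "(\<Sum>r\<in>{1..2*Suc M}. (1/2)^r * (k - real ((r + 1) div 2) + (if even r then u else v)))
     = (1/2)^(2*M+2) * (k - real (M + 1) + u) + ((1/2)^(2*M+1) * (k - real (M+1) + v)
        + (\<Sum>r\<in>{1..2*M}. (1/2)^r * (k - real ((r + 1) div 2) + (if even r then u else v))))"
    unfolding e by (simp add: d del: power_Suc)
  also have "\<dots> = L - (1/4)^(Suc M) * (L - real (Suc M))"
    unfolding Suc p L_def by (simp add: field_simps)
  finally show ?case .
qed

lemma dyadic_level_sum_error:
  fixes k u v :: real and R :: nat
  defines "L \<equiv> k + (2 * v + u) / 3 - 4 / 3"
  defines "S \<equiv> (\<Sum>r\<in>{1..R}. (1/2)^r * (k - real ((r + 1) div 2) + (if even r then u else v)))"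
  shows "\<bar>S - L\<bar> \<le> (1/2)^R * (\<bar>k\<bar> + \<bar>v\<bar> + 2 * \<bar>L\<bar> + 2 * real R + 1)"
proof (cases "even R")
  case True
  then obtain M where M: "R = 2 * M" by (auto elim: evenE)
  have "(1/4::real)^M = (1/2)^R" unfolding M by (simp add: power_mult power2_eq_square)
  then have "\<bar>S - L\<bar> = (1/2)^R * \<bar>L - real M\<bar>"
    unfolding S_def M dyadic_level_sum_even L_def by (simp add: abs_mult)
  also have "\<dots> \<le> (1/2)^R * (\<bar>k\<bar> + \<bar>v\<bar> + 2 * \<bar>L\<bar> + 2 * real R + 1)"
    unfolding M by (intro mult_left_mono) auto
  finally show ?thesis .
next
  case False
  then obtain M where M: "R = 2 * M + 1" by (auto elim: oddE)
  define q :: real where "q = (1/2)^R"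
  have q4: "(1/4::real)^M = 2 * q" unfolding q_def M by (simp add: power_mult power2_eq_square)
  have e: "{1..R} = insert (2*M+1) {1..2*M}" unfolding M by auto
  have se: "(\<Sum>r\<in>{1..2*M}. (1/2)^r * (k - real ((r + 1) div 2) + (if even r then u else v)))
      = L - (1/4)^M * (L - real M)"
    unfolding L_def by (rule dyadic_level_sum_even)
  have "S = q * (k - real (M + 1) + v)
        + (\<Sum>r\<in>{1..2*M}. (1/2)^r * (k - real ((r + 1) div 2) + (if even r then u else v)))"
    unfolding S_def e q_def M by (simp del: power_Suc)
  also have "\<dots> = q * (k - real (M + 1) + v) + (L - 2 * q * (L - real M))"
    unfolding se q4 ..
  finally have "S - L = q * (k + v - 2 * L + real M - 1)" by (simp add: algebra_simps)
  then have "\<bar>S - L\<bar> = q * \<bar>k + v - 2 * L + real M - 1\<bar>" unfolding q_def by (simp add: abs_mult)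
  also have "\<dots> \<le> q * (\<bar>k\<bar> + \<bar>v\<bar> + 2 * \<bar>L\<bar> + 2 * real R + 1)"
    unfolding q_def M by (intro mult_left_mono) auto
  finally show ?thesis unfolding q_def .
qed

lemma sqrt2_thresholds:
  "(p \<le> (1 + sqrt 2) / 4) = ((sqrt 2 - 1) * p \<le> 1/4)"
  "(p \<le> (2 + sqrt 2) / 4) = ((2 - sqrt 2) * p \<le> 1/2)"
proof -
  have "(sqrt 2 - 1) * ((1 + sqrt 2) / 4) = 1/4" "(2 - sqrt 2) * ((2 + sqrt 2) / 4) = (1/2::real)"
    by (simp_all add: algebra_simps)
  moreover have "sqrt 2 - 1 > 0" "2 - sqrt 2 > (0::real)" using sqrt2_bounds by auto
  ultimately show "(p \<le> (1 + sqrt 2) / 4) = ((sqrt 2 - 1) * p \<le> 1/4)"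
    "(p \<le> (2 + sqrt 2) / 4) = ((2 - sqrt 2) * p \<le> 1/2)"
    by (metis mult_le_cancel_left_pos)+
qed

text \<open>The three cases of Tcal are the three possible pairs (even_shift p, odd_shift p),
  namely (2, 1), (1, 1) and (1, 0).\<close>
lemma Tcal_eq: assumes i: "1 \<le> i"
  shows "Tcal i = (2 * odd_corr (px (real i)) + even_corr (px (real i))) / 3 - 4 / 3"
proof -
  define p where "p = px (real i)"
  define s where "s = sqrt (2::real)"
  have pb: "1/2 < p" "p \<le> 1" using px_bounds[of "real i"] i unfolding p_def by auto
  have s: "s * s = 2" "7/5 < s" "s < 17/12" unfolding s_def using sqrt2_bounds by auto
  have T: "Tcal i = 5 - 4 * s - 1 / p + 1 / (6 * p\<^sup>2) +
     (if p \<le> (1 + s) / 4 then - 1 / (6 * p) - 1 / (16 * p\<^sup>2) - 2 / 3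
      else if p \<le> (2 + s) / 4 then - s / (3 * p) - 1 / 3
      else - 4 / (3 * p) + 1 / (4 * p\<^sup>2) + 1 / 3)"
    unfolding Tcal_def Let_def p_def s_def ..
  have c1: "(p \<le> (1 + s) / 4) = ((s - 1) * p \<le> 1/4)"
    and c2: "(p \<le> (2 + s) / 4) = ((2 - s) * p \<le> 1/2)"
    unfolding s_def by (rule sqrt2_thresholds)+
  have p0: "p \<noteq> 0" using pb by simp
  have G: "lim_profile a = 1 - a - (3 - 2 * s) * ((a - 1) * (2 - a))" for a
    unfolding lim_profile_def mu_lim_def s_def ..
  note corr_defs = even_corr_def odd_corr_def even_shift_def even_frac_def odd_shift_def odd_frac_def
  have inv1: "1 / (4 * (s - 1) * p) = (s + 1) / (4 * p)" "1 / (2 * (s - 1) * p) = (s + 1) / (2 * p)"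
    "1 / ((2 - s) * p) = (2 + s) / (2 * p)" "1 / (2 * (2 - s) * p) = (2 + s) / (4 * p)"
    using s p0 by (simp_all add: field_simps)
  show ?thesis
  proof (cases "(s - 1) * p \<le> 1/4")
    case A: True
    then have "p \<le> (1 + s) / 4" using c1 by simp
    then have "p \<le> 29/48" using s by simp
    then have "(2 - s) * p \<le> (3/5) * (29/48)" using s pb by (intro mult_mono) auto
    then have B: "(2 - s) * p \<le> 1/2" by simp
    have e: "even_corr p = -2 + lim_profile ((s + 1) / (4 * p))" "odd_corr p = -1 + lim_profile ((2 + s) / (4 * p))"
      unfolding corr_defs s_def[symmetric] using A B inv1 by auto
    show ?thesis unfolding T p_def[symmetric] e G using A c1 s p0 by (simp add: field_simps power2_eq_square)
  next
    case A: False
    show ?thesis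
    proof (cases "(2 - s) * p \<le> 1/2")
      case B: True
      have e: "even_corr p = -1 + lim_profile ((s + 1) / (2 * p))" "odd_corr p = -1 + lim_profile ((2 + s) / (4 * p))"
        unfolding corr_defs s_def[symmetric] using A B inv1 by auto
      show ?thesis unfolding T p_def[symmetric] e G using A B c1 c2 s p0 by (simp add: field_simps power2_eq_square)
    next
      case B: False
      have e: "even_corr p = -1 + lim_profile ((s + 1) / (2 * p))" "odd_corr p = 0 + lim_profile ((2 + s) / (2 * p))"
        unfolding corr_defs s_def[symmetric] using A B inv1 by auto
      show ?thesis unfolding T p_def[symmetric] e G using A B c1 c2 s p0 by (simp add: field_simps power2_eq_square)
    qed
  qed
qed

section \<open>The expected cost\<close>

text \<open>The probability that both inserted elements fall among the last tail i r positions,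
  i.e. that Step 2 makes more than r comparisons.\<close>
definition Pr_beyond :: "nat \<Rightarrow> nat \<Rightarrow> real" where
  "Pr_beyond i r = real (tail i r) * (real (tail i r) - 1) / (real i * (real i - 1))"

lemma Pr_beyond_0: "2 \<le> i \<Longrightarrow> Pr_beyond i 0 = 1"
  unfolding Pr_beyond_def tail_0 by simp

lemma PrR_nonneg: "0 \<le> PrR i r"
  unfolding PrR_def posprob_def by (intro sum_nonneg) auto

lemma PrR_eq_Pr_beyond_diff:
  assumes i: "2 \<le> i" and r: "1 \<le> r" "r \<le> rmax i"
  shows "PrR i r = Pr_beyond i (r - 1) - Pr_beyond i r"
  unfolding PrR_eq[OF i r] Pr_beyond_def by (simp add: diff_divide_distrib)

lemma tail_sq_bounds: "real (tail i r) * (real (tail i r) - 1) \<le> (tail_real i r)^2"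
  "(tail_real i r)^2 - 3 * tail_real i r \<le> real (tail i r) * (real (tail i r) - 1)"
proof -
  define x where "x = tail_real i r"
  define b where "b = real (tail i r)"
  have hb: "b \<le> x" "x < b + 1" "0 \<le> b" unfolding x_def b_def using tail_bounds by auto
  have "b * (b - 1) \<le> b * b" using hb by (simp add: right_diff_distrib)
  also have "\<dots> \<le> x * x" using hb by (intro mult_mono) auto
  finally show "real (tail i r) * (real (tail i r) - 1) \<le> (tail_real i r)^2"
    unfolding x_def[symmetric] b_def[symmetric] by (simp add: power2_eq_square)
  define d where "d = x - b"
  have d: "0 \<le> d" "d < 1" unfolding d_def using hb by auto
  have "b * (b - 1) - (x^2 - 3 * x) = 2 * x * (1 - d) + d^2 + d"
    unfolding d_def by (simp add: algebra_simps power2_eq_square)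
  moreover have "0 \<le> 2 * x * (1 - d) + d^2 + d" using d hb by simp
  ultimately show "(tail_real i r)^2 - 3 * tail_real i r \<le> real (tail i r) * (real (tail i r) - 1)"
    unfolding x_def[symmetric] b_def[symmetric] by simp
qed

lemma two_powr_neg_half: "(2::real) powr (- real r / 2) = (inverse (sqrt 2)) ^ r"
proof -
  have "(2::real) powr (- real r / 2) = (2 powr (- 1 / 2)) powr (real r)" by (simp add: powr_powr)
  also have "\<dots> = (2 powr (- 1 / 2)) ^ r" by (simp add: powr_realpow)
  also have "(2::real) powr (- 1 / 2) = inverse (sqrt 2)" by (simp add: powr_minus powr_half_sqrt)
  finally show ?thesis .
qed

lemma tail_real_sq: "(tail_real i r)^2 = (real i)^2 * (1/2)^r"
proof -
  have "(inverse (sqrt 2) ^ r)^2 = ((inverse (sqrt (2::real)))^2)^r"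
    by (simp only: power_mult[symmetric] mult.commute)
  also have "(inverse (sqrt (2::real)))^2 = 1/2" by (simp add: power_inverse)
  finally have "(inverse (sqrt 2) ^ r)^2 = ((1::real)/2)^r" .
  then show ?thesis unfolding tail_real_def two_powr_neg_half by (simp add: power_mult_distrib)
qed

lemma Pr_beyond_near_half_power: assumes i: "4 \<le> i"
  shows "\<bar>Pr_beyond i r - (1/2)^r\<bar> \<le> 3 * tail_real i r / (real i * (real i - 1))"
proof -
  define x where "x = tail_real i r"
  define T where "T = real (tail i r) * (real (tail i r) - 1)"
  define Q where "Q = real i * (real i - 1)"
  have Q0: "Q > 0" unfolding Q_def using i by simp
  have i0: "real i > 0" using i by simp
  have x0: "0 \<le> x" "x \<le> real i" unfolding x_def using tail_real_nonneg tail_real_le by auto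
  have T: "x^2 - 3 * x \<le> T" "T \<le> x^2" unfolding x_def T_def using tail_sq_bounds by auto
  have h: "(1/2)^r = x^2 / (real i)^2" unfolding x_def tail_real_sq using i0 by simp
  have key: "x^2 / Q - x^2 / (real i)^2 = (x^2 / real i) / Q"
    unfolding Q_def using i by (simp add: field_simps power2_eq_square)
  have eq: "Pr_beyond i r - (1/2)^r = (T - x^2) / Q + (x^2 / real i) / Q"
    unfolding Pr_beyond_def T_def[symmetric] Q_def[symmetric] h key[symmetric]
    by (simp add: diff_divide_distrib)
  have "-3 * x \<le> T - x^2" using T by linarith
  then have a1: "-3 * x / Q \<le> (T - x^2) / Q" using Q0 by (intro divide_right_mono) auto
  have a1': "(T - x^2) / Q \<le> 0" using T Q0 by (simp add: divide_nonpos_pos)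
  have "x^2 / real i \<le> x" using x0 i0 by (simp add: power2_eq_square field_simps mult_left_mono)
  then have a2b: "(x^2 / real i) / Q \<le> x / Q" using Q0 by (intro divide_right_mono) auto
  have a2a: "0 \<le> (x^2 / real i) / Q" using Q0 i0 by simp
  note a2 = a2a a2b
  have xq: "0 \<le> x / Q" using x0 Q0 by simp
  have e3: "3 * x / Q = 3 * (x / Q)" "-3 * x / Q = - (3 * (x / Q))" by simp_all
  have "\<bar>Pr_beyond i r - (1/2)^r\<bar> \<le> 3 * x / Q" unfolding eq abs_le_iff using a1 a1' a2 xq e3 by linarith
  then show ?thesis unfolding x_def Q_def .
qed

lemma sum_by_parts_atLeastAtMost:
  fixes d f :: "nat \<Rightarrow> real"
  shows "(\<Sum>r\<in>{1..R}. (d (r - 1) - d r) * f r)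
    = d 0 * f 1 - d R * f (R + 1) + (\<Sum>r\<in>{1..R}. d r * (f (r + 1) - f r))"
  by (induction R) (simp_all add: algebra_simps)

lemma tail_real_sum: "(\<Sum>r\<in>{1..R}. tail_real i r) \<le> 3 * real i"
proof -
  define q where "q = inverse (sqrt (2::real))"
  have q: "0 \<le> q" "q \<le> 3/4" unfolding q_def using sqrt2_bounds by (auto simp: field_simps)
  have S0: "0 \<le> (\<Sum>r\<in>{1..R}. q ^ r)" using q by (simp add: sum_nonneg)
  have "(1 - q) * (\<Sum>r\<in>{1..R}. q ^ r) \<le> q"
    using sum_gp_multiplied[of 1 R q] q by (cases "1 \<le> R") auto
  moreover have "1/4 * (\<Sum>r\<in>{1..R}. q ^ r) \<le> (1 - q) * (\<Sum>r\<in>{1..R}. q ^ r)"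
    using q S0 by (intro mult_right_mono) auto
  ultimately have "(\<Sum>r\<in>{1..R}. q ^ r) \<le> 3" using q by linarith
  then have "real i * (\<Sum>r\<in>{1..R}. q ^ r) \<le> real i * 3" by (intro mult_left_mono) auto
  then show ?thesis unfolding tail_real_def two_powr_neg_half q_def by (simp add: sum_distrib_left)
qed

lemma Acal_lim_div_sqrt2: assumes w: "w > 0" shows "\<bar>Acal_lim (w / sqrt 2) - Acal_lim w\<bar> \<le> 5"
proof -
  have w2: "w / sqrt 2 > 0" using w by simp
  have a: "w / sqrt 2 \<le> w" using w sqrt2_bounds by (simp add: field_simps)
  have b: "w / 2 < w / sqrt 2" using w sqrt2_bounds by (simp add: field_simps)
  have k1: "ceil_log2 (w / sqrt 2) \<le> ceil_log2 w"
    using ceil_log2_le[OF w2, of "ceil_log2 w"] ceil_log2_bounds(2)[OF w] a by simp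
  have "2 powr (real_of_int (ceil_log2 w) - 1) < w" using ceil_log2_bounds(1)[OF w] by simp
  then have h1: "2 powr (real_of_int (ceil_log2 w - 2)) < w / 2" by (simp add: powr_diff)
  have h: "2 powr (real_of_int (ceil_log2 w - 2)) < w / sqrt 2" using h1 b by linarith
  have "ceil_log2 w - 2 < ceil_log2 (w / sqrt 2)" by (rule ceil_log2_gt[OF w2 h])
  moreover have "\<bar>Acal_lim (w / sqrt 2) - ceil_log2 (w / sqrt 2)\<bar> \<le> 2" "\<bar>Acal_lim w - ceil_log2 w\<bar> \<le> 2"
    using Acal_lim_near_ceil_log2 w w2 by auto
  ultimately show ?thesis using k1 by linarith
qed

lemma wr_succ: "wr i (Suc r) = wr i r / sqrt 2"
  unfolding wr_eq_tail_real using tail_real_prev[of "Suc r" i] by simp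

lemma Acal_lim_wr_beyond_rmax: assumes i: "1 \<le> i" shows "\<bar>Acal_lim (wr i (Suc (rmax i)))\<bar> \<le> 3"
proof -
  define x where "x = tail_real i (rmax i)"
  have x: "1 \<le> x" "x < sqrt 2" unfolding x_def using tail_real_ge1[OF i] tail_real_rmax_lt[OF i] by auto
  define w where "w = wr i (Suc (rmax i))"
  have we: "w = (sqrt 2 - 1) * x / sqrt 2" by (simp only: w_def wr_succ) (simp add: wr_eq_tail_real x_def)
  have w0: "1/4 < w"
  proof -
    have "(sqrt 2 - 1) / sqrt 2 \<le> (sqrt 2 - 1) * x / sqrt 2" using x sqrt2_bounds by (simp add: divide_right_mono)
    moreover have "1/4 < (sqrt 2 - 1) / sqrt 2" using sqrt2_bounds by (simp add: field_simps)
    ultimately show ?thesis unfolding we by linarith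
  qed
  have w1: "w \<le> 1"
  proof -
    have "(sqrt 2 - 1) * x \<le> (sqrt 2 - 1) * sqrt 2" using x sqrt2_bounds by (intro mult_left_mono) auto
    then have "w \<le> (sqrt 2 - 1) * sqrt 2 / sqrt 2" unfolding we by (intro divide_right_mono) auto
    then show ?thesis using sqrt2_bounds by simp
  qed
  have wp: "w > 0" using w0 by simp
  have "ceil_log2 w \<le> 0" using ceil_log2_le[OF wp, of 0] w1 by simp
  moreover have "-2 < ceil_log2 w" using ceil_log2_gt[OF wp, of "-2"] w0 by (simp add: powr_minus)
  moreover have "\<bar>Acal_lim w - ceil_log2 w\<bar> \<le> 2" using Acal_lim_near_ceil_log2[OF wp] .
  ultimately show ?thesis unfolding w_def[symmetric] by linarith
qed

lemma PrR_upper: assumes i: "4 \<le> i" and r: "1 \<le> r" "r \<le> rmax i"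
  shows "PrR i r \<le> ((tail_real i r)^2 + 3 * tail_real i r) / (real i * (real i - 1))"
proof -
  have i2: "2 \<le> i" using i by simp
  define Q where "Q = real i * (real i - 1)"
  have Q0: "Q > 0" unfolding Q_def using i by simp
  have u: "real (tail i (r-1)) * (real (tail i (r-1)) - 1) \<le> 2 * (tail_real i r)^2"
    using tail_sq_bounds(1)[of i "r-1"] tail_real_prev[OF r(1), of i] by (simp add: power_mult_distrib)
  have l: "(tail_real i r)^2 - 3 * tail_real i r \<le> real (tail i r) * (real (tail i r) - 1)" by (rule tail_sq_bounds(2))
  have "PrR i r = (real (tail i (r-1)) * (real (tail i (r-1)) - 1) - real (tail i r) * (real (tail i r) - 1)) / Q"
    unfolding PrR_eq_Pr_beyond_diff[OF i2 r] Pr_beyond_def Q_def by (simp add: diff_divide_distrib)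
  also have "\<dots> \<le> ((tail_real i r)^2 + 3 * tail_real i r) / Q" using u l Q0 by (intro divide_right_mono) auto
  finally show ?thesis unfolding Q_def .
qed

lemma PrR_Acal_near_PrR_Acal_lim: assumes i: "4 \<le> i" and r: "1 \<le> r" "r \<le> rmax i"
  shows "\<bar>PrR i r * Acal i r - PrR i r * Acal_lim (wr i r)\<bar> \<le> 200 * (tail_real i r + 3) / (real i * (real i - 1))"
proof (cases "PrR i r = 0")
  case True then show ?thesis using i tail_real_nonneg[of i r] by simp
next
  case False
  then have P: "PrR i r > 0" using PrR_nonneg[of i r] by simp
  define x where "x = tail_real i r"
  define Q where "Q = real i * (real i - 1)"
  have Q0: "Q > 0" unfolding Q_def using i by simp
  have x1: "1 \<le> x" unfolding x_def by (rule tail_real_ge1) (use i r in auto)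
  have "\<bar>PrR i r * Acal i r - PrR i r * Acal_lim (wr i r)\<bar> = PrR i r * \<bar>Acal i r - Acal_lim (wr i r)\<bar>"
    using P by (simp add: abs_mult right_diff_distrib[symmetric])
  also have "\<dots> \<le> ((x^2 + 3 * x) / Q) * (200 / x)"
    using PrR_upper[OF i r] Acal_near_Acal_lim[OF i r P] P unfolding x_def Q_def
    by (intro mult_mono) auto
  also have "\<dots> = 200 * (x + 3) / Q" using x1 Q0 by (simp add: field_simps power2_eq_square)
  finally show ?thesis unfolding x_def Q_def .
qed

lemma log2_le_self: assumes "1 \<le> i" shows "log 2 (real i) \<le> real i"
proof -
  have "i < 2 ^ i" by (rule less_exp)
  then have "real i \<le> 2 powr (real i)" by (simp add: powr_realpow)
  then show ?thesis using log_le_iff[of 2 "real i" "real i"] assms by simp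
qed

lemma rmax_le: assumes "1 \<le> i" shows "real (rmax i) \<le> 2 * real i"
proof -
  have h: "0 \<le> 2 * log 2 (real i)" using assms by simp
  have "real (rmax i) \<le> 2 * log 2 (real i)" unfolding rmax_def using h by (simp add: of_nat_nat)
  then show ?thesis using log2_le_self[OF assms] by linarith
qed

lemma ceil_log2_of_nat_bounds: assumes "1 \<le> i" shows "0 \<le> ceil_log2 (real i)" "ceil_log2 (real i) \<le> int i"
proof -
  have ip: "real i > 0" using assms by simp
  have "2 powr (real_of_int (-1)) < real i" using assms by (simp add: powr_minus)
  then show "0 \<le> ceil_log2 (real i)"  using ceil_log2_gt[OF ip, of "-1"] by simp
  have "i < 2 ^ i" by (rule less_exp)
  then have "real i \<le> 2 powr (real_of_int (int i))" by (simp add: powr_realpow)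
  then show "ceil_log2 (real i) \<le> int i"  using ceil_log2_le[OF ip] by simp
qed

lemma half_power_rmax: assumes "1 \<le> i" shows "(1/2::real) ^ rmax i \<le> 2 / (real i)^2"
proof -
  have "(tail_real i (rmax i))^2 < (sqrt 2)^2"
    using tail_real_rmax_lt[OF assms] tail_real_nonneg[of i "rmax i"] by (intro power_strict_mono) auto
  then have "(real i)^2 * (1/2)^rmax i < 2" unfolding tail_real_sq by simp
  moreover have "(real i)^2 > 0" using assms by simp
  ultimately show ?thesis by (simp add: field_simps)
qed

lemma Acal_lim_half_power_sum:
  assumes i: "4 \<le> i"
  shows "\<bar>(\<Sum>r\<in>{1..rmax i}. (1/2)^r * Acal_lim (wr i r)) - (real_of_int (ceil_log2 (real i)) + Tcal i)\<bar>
    \<le> 24 / real i"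
proof -
  have i1: "1 \<le> i" using i by simp
  define p where "p = px (real i)"
  define k where "k = real_of_int (ceil_log2 (real i))"
  define L where "L = k + (2 * odd_corr p + even_corr p) / 3 - 4 / 3"
  define R where "R = rmax i"
  have L: "L = k + Tcal i" unfolding L_def p_def Tcal_eq[OF i1] by simp
  have p: "1/2 < p" "p \<le> 1" unfolding p_def using px_bounds i1 by auto
  have k: "\<bar>k\<bar> \<le> real i" unfolding k_def using ceil_log2_of_nat_bounds[OF i1] by auto
  have v: "\<bar>odd_corr p\<bar> \<le> 4" and u: "\<bar>even_corr p\<bar> \<le> 4"
    using odd_corr_bound even_corr_bound p by auto
  have "k \<le> real i" "- k \<le> real i" "odd_corr p \<le> 4" "- odd_corr p \<le> 4" "even_corr p \<le> 4" "- even_corr p \<le> 4"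
    using k u v by (auto simp: abs_le_iff)
  then have "\<bar>L\<bar> \<le> real i + 6" unfolding L_def abs_le_iff by (auto simp: field_simps)
  moreover have "real R \<le> 2 * real i" unfolding R_def by (rule rmax_le[OF i1])
  ultimately have "\<bar>k\<bar> + \<bar>odd_corr p\<bar> + 2 * \<bar>L\<bar> + 2 * real R + 1 \<le> 12 * real i"
    using k v i by linarith
  moreover have "(1/2::real)^R \<le> 2 / (real i)^2" unfolding R_def by (rule half_power_rmax[OF i1])
  ultimately have "(1/2::real)^R * (\<bar>k\<bar> + \<bar>odd_corr p\<bar> + 2 * \<bar>L\<bar> + 2 * real R + 1)
      \<le> 2 / (real i)^2 * (12 * real i)"
    by (intro mult_mono) auto
  also have "\<dots> = 24 / real i" using i by (simp add: power2_eq_square)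
  finally have "\<bar>(\<Sum>r\<in>{1..R}. (1/2)^r * (k - real ((r + 1) div 2) + (if even r then even_corr p else odd_corr p))) - L\<bar>
      \<le> 24 / real i"
    using dyadic_level_sum_error[of k "even_corr p" "odd_corr p" R] unfolding L_def by linarith
  moreover have "(\<Sum>r\<in>{1..R}. (1/2)^r * Acal_lim (wr i r))
      = (\<Sum>r\<in>{1..R}. (1/2)^r * (k - real ((r + 1) div 2) + (if even r then even_corr p else odd_corr p)))"
    unfolding k_def p_def using Acal_lim_wr[OF i1] by (intro sum.cong) auto
  ultimately show ?thesis unfolding L R_def k_def by simp
qed

lemma expected_step3_near_PrR_sum:
  assumes i: "4 \<le> i"
  shows "\<bar>expected_step3 i - (\<Sum>r\<in>{1..rmax i}. PrR i r * Acal_lim (wr i r))\<bar>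
    \<le> 1800 * real i / (real i * (real i - 1))"
proof -
  define R where "R = rmax i"
  define Q where "Q = real i * (real i - 1)"
  have Q0: "Q > 0" unfolding Q_def using i by simp
  have "\<bar>expected_step3 i - (\<Sum>r\<in>{1..R}. PrR i r * Acal_lim (wr i r))\<bar>
      \<le> (\<Sum>r\<in>{1..R}. \<bar>PrR i r * Acal i r - PrR i r * Acal_lim (wr i r)\<bar>)"
    unfolding expected_step3_def R_def by (simp add: sum_subtractf[symmetric] sum_abs)
  also have "\<dots> \<le> (\<Sum>r\<in>{1..R}. 200 * (tail_real i r + 3) / Q)"
    unfolding Q_def R_def by (intro sum_mono PrR_Acal_near_PrR_Acal_lim[OF i]) auto
  also have "\<dots> = 200 * ((\<Sum>r\<in>{1..R}. tail_real i r) + 3 * real R) / Q"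
    by (simp add: sum_divide_distrib[symmetric] sum_distrib_left[symmetric] sum.distrib)
  also have "\<dots> \<le> 200 * (3 * real i + 3 * (2 * real i)) / Q"
    using tail_real_sum[of i R] rmax_le[of i] i Q0 unfolding R_def
    by (intro divide_right_mono mult_left_mono add_mono) auto
  finally show ?thesis unfolding Q_def R_def by simp
qed

lemma PrR_sum_by_parts:
  fixes F :: "nat \<Rightarrow> real"
  assumes i: "2 \<le> i"
  defines "\<delta> r \<equiv> Pr_beyond i r - (1/2)^r"
  shows "(\<Sum>r\<in>{1..rmax i}. PrR i r * F r) - (\<Sum>r\<in>{1..rmax i}. (1/2)^r * F r)
    = - \<delta> (rmax i) * F (rmax i + 1) + (\<Sum>r\<in>{1..rmax i}. \<delta> r * (F (r + 1) - F r))"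
proof -
  have "PrR i r * F r - (1/2)^r * F r = (\<delta> (r - 1) - \<delta> r) * F r" if "r \<in> {1..rmax i}" for r
  proof -
    have r: "1 \<le> r" "r \<le> rmax i" using that by auto
    have "(1/2::real)^(r - 1) = 2 * (1/2)^r" using r by (cases r) auto
    then show ?thesis unfolding PrR_eq_Pr_beyond_diff[OF i r] \<delta>_def by (simp add: algebra_simps)
  qed
  then have "(\<Sum>r\<in>{1..rmax i}. PrR i r * F r) - (\<Sum>r\<in>{1..rmax i}. (1/2)^r * F r)
      = (\<Sum>r\<in>{1..rmax i}. (\<delta> (r - 1) - \<delta> r) * F r)"
    by (simp add: sum_subtractf[symmetric])
  also have "\<dots> = - \<delta> (rmax i) * F (rmax i + 1) + (\<Sum>r\<in>{1..rmax i}. \<delta> r * (F (r + 1) - F r))"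
    using sum_by_parts_atLeastAtMost[of \<delta> F "rmax i"] Pr_beyond_0[OF i]
    by (simp add: \<delta>_def algebra_simps)
  finally show ?thesis .
qed

lemma PrR_sum_near_half_power_sum:
  assumes i: "4 \<le> i"
  shows "\<bar>(\<Sum>r\<in>{1..rmax i}. PrR i r * Acal_lim (wr i r)) - (\<Sum>r\<in>{1..rmax i}. (1/2)^r * Acal_lim (wr i r))\<bar>
    \<le> (18 + 45 * real i) / (real i * (real i - 1))"
proof -
  have i1: "1 \<le> i" and i2: "2 \<le> i" using i by simp_all
  define R where "R = rmax i"
  define Q where "Q = real i * (real i - 1)"
  define F where "F r = Acal_lim (wr i r)" for r
  define \<delta> where "\<delta> r = Pr_beyond i r - (1/2)^r" for r
  have Q0: "Q > 0" unfolding Q_def using i by simp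
  have \<delta>: "\<bar>\<delta> r\<bar> \<le> 3 * tail_real i r / Q" for r
    unfolding \<delta>_def Q_def by (rule Pr_beyond_near_half_power[OF i])
  have eq: "(\<Sum>r\<in>{1..R}. PrR i r * F r) - (\<Sum>r\<in>{1..R}. (1/2)^r * F r)
      = - \<delta> R * F (R + 1) + (\<Sum>r\<in>{1..R}. \<delta> r * (F (r + 1) - F r))"
    unfolding \<delta>_def R_def by (rule PrR_sum_by_parts[OF i2])
  have "3 * tail_real i R / Q \<le> 6 / Q"
    using tail_real_rmax_lt[OF i1] sqrt2_bounds Q0 unfolding R_def by (intro divide_right_mono) auto
  then have "\<bar>\<delta> R\<bar> \<le> 6 / Q" using \<delta>[of R] by linarith
  moreover have "\<bar>F (R + 1)\<bar> \<le> 3" unfolding F_def R_def using Acal_lim_wr_beyond_rmax[OF i1] by simp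
  ultimately have "\<bar>\<delta> R * F (R + 1)\<bar> \<le> 6 / Q * 3" unfolding abs_mult using Q0 by (intro mult_mono) auto
  moreover have "\<bar>\<Sum>r\<in>{1..R}. \<delta> r * (F (r + 1) - F r)\<bar> \<le> 45 * real i / Q"
  proof -
    have "\<bar>\<delta> r * (F (r + 1) - F r)\<bar> \<le> 15 * tail_real i r / Q" if "r \<in> {1..R}" for r
    proof -
      have "1 \<le> tail_real i r" using that tail_real_ge1[OF i1] unfolding R_def by auto
      then have "wr i r > 0" unfolding wr_eq_tail_real using sqrt2_bounds by simp
      then have "\<bar>F (r + 1) - F r\<bar> \<le> 5" unfolding F_def using Acal_lim_div_sqrt2 wr_succ[of i r] by simp
      then have "\<bar>\<delta> r\<bar> * \<bar>F (r + 1) - F r\<bar> \<le> (3 * tail_real i r / Q) * 5"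
        using \<delta>[of r] by (intro mult_mono) auto
      then show ?thesis by (simp add: abs_mult)
    qed
    then have "\<bar>\<Sum>r\<in>{1..R}. \<delta> r * (F (r + 1) - F r)\<bar> \<le> (\<Sum>r\<in>{1..R}. 15 * tail_real i r / Q)"
      by (intro order.trans[OF sum_abs] sum_mono) auto
    also have "\<dots> = 15 * (\<Sum>r\<in>{1..R}. tail_real i r) / Q"
      by (simp add: sum_divide_distrib[symmetric] sum_distrib_left[symmetric])
    also have "\<dots> \<le> 15 * (3 * real i) / Q" using tail_real_sum Q0 by (intro divide_right_mono) auto
    finally show ?thesis by simp
  qed
  moreover have "(18 + 45 * real i) / Q = 6 / Q * 3 + 45 * real i / Q" by (simp add: add_divide_distrib)
  ultimately have "\<bar>(\<Sum>r\<in>{1..R}. PrR i r * F r) - (\<Sum>r\<in>{1..R}. (1/2)^r * F r)\<bar> \<le> (18 + 45 * real i) / Q"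
    unfolding eq by linarith
  then show ?thesis unfolding F_def R_def Q_def .
qed

lemma expected_step3_approx:
  assumes i: "4 \<le> i"
  shows "\<bar>expected_step3 i - (real_of_int \<lceil>log 2 (real i)\<rceil> + Tcal i)\<bar> \<le> 4000 / real i"
proof -
  define Q where "Q = real i * (real i - 1)"
  have iQ: "real i / Q \<le> 2 / real i" unfolding Q_def using i by (simp add: field_simps)
  have "\<bar>expected_step3 i - (real_of_int \<lceil>log 2 (real i)\<rceil> + Tcal i)\<bar>
      \<le> 1800 * (real i / Q) + (18 + 45 * real i) / Q + 24 / real i"
    using expected_step3_near_PrR_sum[OF i] PrR_sum_near_half_power_sum[OF i]
      Acal_lim_half_power_sum[OF i] unfolding Q_def ceil_log2_def by linarith
  also have "(18 + 45 * real i) / Q \<le> 50 * real i / Q"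
    using i unfolding Q_def by (intro divide_right_mono) auto
  also have "1800 * (real i / Q) + 50 * real i / Q \<le> 1850 * (2 / real i)"
    using iQ by (simp add: times_divide_eq_right[symmetric] del: times_divide_eq_right)
  also have "1850 * (2 / real i) + 24 / real i \<le> 4000 / real i"
    using i by (simp add: field_simps)
  finally show ?thesis by simp
qed

lemma Acal_approx:
  assumes i: "4 \<le> i" and r: "1 \<le> r" "r \<le> rmax i" and P: "PrR i r > 0"
  shows "\<bar>Acal i r - (real_of_int \<lceil>log 2 (wr i r)\<rceil> + 7 - 4 * sqrt 2
      - (10 - 6 * sqrt 2) / px (wr i r) + (3 - 2 * sqrt 2) / (px (wr i r))\<^sup>2)\<bar>
    \<le> 200 * 2 powr (real r / 2) / real i"
proof -
  have "wr i r > 0" unfolding wr_eq_tail_real using tail_real_ge1[OF _ r(2)] i sqrt2_bounds by simp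
  moreover have "200 / tail_real i r = 200 * 2 powr (real r / 2) / real i"
    unfolding tail_real_def by (simp add: powr_minus field_simps)
  ultimately show ?thesis using Acal_near_Acal_lim[OF i r P] Acal_lim_eq by simp
qed

theorem lemma1:
  shows "(\<exists>C. \<forall>i r. even i \<and> 4 \<le> i \<and> 1 \<le> r \<and> r \<le> rmax i \<and> PrR i r > 0 \<longrightarrow>
            \<bar>Acal i r - (real_of_int \<lceil>log 2 (wr i r)\<rceil> + 7 - 4 * sqrt 2
                 - (10 - 6 * sqrt 2) / px (wr i r) + (3 - 2 * sqrt 2) / (px (wr i r))\<^sup>2)\<bar>
              \<le> C * 2 powr (real r / 2) / real i)
       \<and> (\<exists>C. \<forall>i. even i \<and> 4 \<le> i \<longrightarrow>
            \<bar>expected_step3 i - (real_of_int \<lceil>log 2 (real i)\<rceil> + Tcal i)\<bar> \<le> C / real i)"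
  using Acal_approx expected_step3_approx by blast

end
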